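(* Consider the sub-$\ell^\infty$ structure on $\mathbb{R}^3$ defined by $X_1=\partial_x-\tfrac{y}{2}\partial_z$, $X_2=\partial_y+\tfrac{x}{2}\partial_z$. A regular bang-bang trajectory with more than $5$ arcs is not a time-minimizer.
   Context: Sub-$\ell^\infty$ structure defined by smooth vector fields $X_1,\dots,X_k$ on a manifold $M$: an admissible trajectory is an absolutely continuous curve $\gamma:[0,T]\to M$ together with a measurable control $u=(u_1,\dots,u_k):[0,T]\to\mathbb{R}^k$ with $|u_i(t)|\le1$ for all $i$ and a.e. $t$, such that $\dot\gamma(t)=\sum_i u_i(t)X_i(\gamma(t))$ for a.e. $t$. It is a time-minimizer (optimal) if no admissible trajectory joins $\gamma(0)$ to $\gamma(T)$ in time less than $T$. An extremal pair is a pair $(\lambda,\gamma)$ where $\gamma$ is admissible with control $u$ and $\lambda:[0,T]\to T^*M$ is absolutely continuous with $\lambda(t)\in T^*_{\gamma(t)}M\setminus\{0\}$, such that, with $\mathcal H(\lambda,p,u)=\sum_i u_i\langle\lambda,X_i(p)\rangle$, in canonical coordinates $\dot\lambda=-\partial_p\mathcal H(\lambda,\gamma,u)$, $\dot\gamma=\partial_\lambda\mathcal H(\lambda,\gamma,u)$ a.e., and there is a constant $\lambda_0\ge0$ with $\sum_iu_i(t)\langle\lambda(t),X_i(\gamma(t))\rangle=\sum_i|\langle\lambda(t),X_i(\gamma(t))\rangle|=\lambda_0$ for a.e. $t$; $\gamma$ is then an extremal trajectory and $\lambda$ an extremal lift. The switching functions are $\varphi_j(t)=\langle\lambda(t),X_j(\gamma(t))\rangle$.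 The restriction of an extremal pair to an open interval $I$ is a regular arc if $\varphi_j(t)\ne0$ for all $t\in I$ and all $j$; arcs are taken maximal (not contained in a strictly larger open interval with the same property). A regular bang-bang trajectory is an extremal trajectory with an extremal lift such that $[0,T]$ minus finitely many points is a finite union of maximal regular arcs (on each of which the control is then constant with values in $\{1,-1\}^k$); these are its arcs. *)

theory Defs
  imports "HOL-Analysis.Analysis"
begin

type_synonym R3 = "real \<times> real \<times> real"

definition abs_cont_on :: "real \<Rightarrow> real \<Rightarrow> (real \<Rightarrow> 'a::real_normed_vector) \<Rightarrow> bool" where
  "abs_cont_on a b f \<longleftrightarrow>
     (\<forall>\<epsilon>>0. \<exists>\<delta>>0. \<forall>(n::nat) (s::nat \<Rightarrow> real) (t::nat \<Rightarrow> real).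
        (\<forall>i<n. a \<le> s i \<and> s i \<le> t i \<and> t i \<le> b) \<and>
        (\<forall>i<n. \<forall>j<n. i \<noteq> j \<longrightarrow> t i \<le> s j \<or> t j \<le> s i) \<and>
        (\<Sum>i<n. t i - s i) < \<delta>
        \<longrightarrow> (\<Sum>i<n. norm (f (t i) - f (s i))) < \<epsilon>)"

definition X1 :: "R3 \<Rightarrow> R3" where
  "X1 p = (case p of (x, y, z) \<Rightarrow> (1, 0, - y / 2))"

definition X2 :: "R3 \<Rightarrow> R3" where
  "X2 p = (case p of (x, y, z) \<Rightarrow> (0, 1, x / 2))"

definition admissible :: "real \<Rightarrow> (real \<Rightarrow> R3) \<Rightarrow> (real \<Rightarrow> real) \<Rightarrow> (real \<Rightarrow> real) \<Rightarrow> bool" where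
  "admissible T \<gamma> u1 u2 \<longleftrightarrow>
     0 \<le> T \<and> abs_cont_on 0 T \<gamma> \<and>
     u1 \<in> borel_measurable (restrict_space lebesgue {0..T}) \<and>
     u2 \<in> borel_measurable (restrict_space lebesgue {0..T}) \<and>
     (AE t in lebesgue. t \<in> {0..T} \<longrightarrow>
        \<bar>u1 t\<bar> \<le> 1 \<and> \<bar>u2 t\<bar> \<le> 1 \<and>
        (\<gamma> has_vector_derivative (u1 t *\<^sub>R X1 (\<gamma> t) + u2 t *\<^sub>R X2 (\<gamma> t))) (at t))"

definition time_minimizer :: "real \<Rightarrow> (real \<Rightarrow> R3) \<Rightarrow> bool" where
  "time_minimizer T \<gamma> \<longleftrightarrow>
     \<not> (\<exists>T' \<gamma>' v1 v2. T' < T \<and> admissible T' \<gamma>' v1 v2 \<and>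
          \<gamma>' 0 = \<gamma> 0 \<and> \<gamma>' T' = \<gamma> T)"

text \<open>Control Hamiltonian H(lambda, p, u) = sum_i u_i <lambda, X_i(p)>
  (covectors on R^3 identified with R^3 via the inner product).\<close>
definition ham :: "R3 \<Rightarrow> R3 \<Rightarrow> real \<Rightarrow> real \<Rightarrow> real" where
  "ham l p v1 v2 = v1 * (l \<bullet> X1 p) + v2 * (l \<bullet> X2 p)"

text \<open>Extremal pair (lambda, gamma) with control (u1,u2):
  lambda' = - d_p H, gamma' = d_lambda H, and maximality condition with constant lambda0.\<close>
definition extremal_pair :: "real \<Rightarrow> (real \<Rightarrow> R3) \<Rightarrow> (real \<Rightarrow> real) \<Rightarrow> (real \<Rightarrow> real)
    \<Rightarrow> (real \<Rightarrow> R3) \<Rightarrow> bool" where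
  "extremal_pair T \<gamma> u1 u2 lam \<longleftrightarrow>
     admissible T \<gamma> u1 u2 \<and> abs_cont_on 0 T lam \<and>
     (\<forall>t\<in>{0..T}. lam t \<noteq> 0) \<and>
     (\<exists>lam0::real. lam0 \<ge> 0 \<and>
       (AE t in lebesgue. t \<in> {0..T} \<longrightarrow>
          (\<exists>l'. (lam has_vector_derivative l') (at t) \<and>
               ((\<lambda>p. ham (lam t) p (u1 t) (u2 t)) has_derivative (\<lambda>h. - (l' \<bullet> h))) (at (\<gamma> t))) \<and>
          (\<gamma> has_vector_derivative
              (u1 t *\<^sub>R X1 (\<gamma> t) + u2 t *\<^sub>R X2 (\<gamma> t))) (at t) \<and>
          ((\<lambda>l. ham l (\<gamma> t) (u1 t) (u2 t)) has_derivative
              (\<lambda>h. h \<bullet> (u1 t *\<^sub>R X1 (\<gamma> t) + u2 t *\<^sub>R X2 (\<gamma> t)))) (at (lam t)) \<and>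
          u1 t * (lam t \<bullet> X1 (\<gamma> t)) + u2 t * (lam t \<bullet> X2 (\<gamma> t)) = lam0 \<and>
          \<bar>lam t \<bullet> X1 (\<gamma> t)\<bar> + \<bar>lam t \<bullet> X2 (\<gamma> t)\<bar> = lam0))"

definition phi1 :: "(real \<Rightarrow> R3) \<Rightarrow> (real \<Rightarrow> R3) \<Rightarrow> real \<Rightarrow> real" where
  "phi1 \<gamma> lam t = lam t \<bullet> X1 (\<gamma> t)"

definition phi2 :: "(real \<Rightarrow> R3) \<Rightarrow> (real \<Rightarrow> R3) \<Rightarrow> real \<Rightarrow> real" where
  "phi2 \<gamma> lam t = lam t \<bullet> X2 (\<gamma> t)"

definition regular_arc :: "real \<Rightarrow> (real \<Rightarrow> R3) \<Rightarrow> (real \<Rightarrow> R3) \<Rightarrow> real \<Rightarrow> real \<Rightarrow> bool" where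
  "regular_arc T \<gamma> lam a b \<longleftrightarrow>
     0 \<le> a \<and> a < b \<and> b \<le> T \<and>
     (\<forall>t\<in>{a<..<b}. phi1 \<gamma> lam t \<noteq> 0 \<and> phi2 \<gamma> lam t \<noteq> 0)"

definition max_regular_arc :: "real \<Rightarrow> (real \<Rightarrow> R3) \<Rightarrow> (real \<Rightarrow> R3) \<Rightarrow> real \<Rightarrow> real \<Rightarrow> bool" where
  "max_regular_arc T \<gamma> lam a b \<longleftrightarrow>
     regular_arc T \<gamma> lam a b \<and>
     (\<forall>a' b'. regular_arc T \<gamma> lam a' b' \<and> {a<..<b} \<subseteq> {a'<..<b'} \<longrightarrow> a' = a \<and> b' = b)"

definition arcs :: "real \<Rightarrow> (real \<Rightarrow> R3) \<Rightarrow> (real \<Rightarrow> R3) \<Rightarrow> (real \<times> real) set" where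
  "arcs T \<gamma> lam = {(a, b). max_regular_arc T \<gamma> lam a b}"

definition regular_bang_bang_wrt :: "real \<Rightarrow> (real \<Rightarrow> R3) \<Rightarrow> (real \<Rightarrow> R3) \<Rightarrow> bool" where
  "regular_bang_bang_wrt T \<gamma> lam \<longleftrightarrow>
     (\<exists>S A. finite S \<and> finite A \<and> A \<subseteq> arcs T \<gamma> lam \<and>
        {0..T} - S = (\<Union>(a, b)\<in>A. {a<..<b}))"

end

theory Submission
  imports Defs
begin

definition nonoverlapping_intervals :: "real \<Rightarrow> real \<Rightarrow> nat \<Rightarrow> (nat \<Rightarrow> real) \<Rightarrow> (nat \<Rightarrow> real) \<Rightarrow> bool" where
  "nonoverlapping_intervals a b n s t \<longleftrightarrow>
     (\<forall>i<n. a \<le> s i \<and> s i \<le> t i \<and> t i \<le> b) \<and> (\<forall>i<n. \<forall>j<n. i \<noteq> j \<longrightarrow> t i \<le> s j \<or> t j \<le> s i)"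

lemma abs_cont_on_iff:
  "abs_cont_on a b f \<longleftrightarrow>
     (\<forall>e>0. \<exists>d>0. \<forall>n s t. nonoverlapping_intervals a b n s t \<longrightarrow> (\<Sum>i<n. t i - s i) < d \<longrightarrow>
        (\<Sum>i<n. norm (f (t i) - f (s i))) < e)"
  unfolding abs_cont_on_def nonoverlapping_intervals_def by (simp add: imp_conjL)

lemma abs_cont_onI :
  assumes "\<And>e. e > 0 \<Longrightarrow> \<exists>d>0. \<forall>n s t. nonoverlapping_intervals a b n s t \<longrightarrow>
     (\<Sum>i<n. t i - s i) < d \<longrightarrow> (\<Sum>i<n. norm (f (t i) - f (s i))) < e"
  shows "abs_cont_on a b f"
  using assms unfolding abs_cont_on_iff by blast

lemma abs_cont_onE:
  assumes "abs_cont_on a b f" "e > 0"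
  obtains d where "d > 0" "\<And>n s t. nonoverlapping_intervals a b n s t \<Longrightarrow>
     (\<Sum>i<n. t i - s i) < d \<Longrightarrow> (\<Sum>i<n. norm (f (t i) - f (s i))) < e"
  using assms unfolding abs_cont_on_iff by meson

lemma abs_cont_on_cong:
  assumes "abs_cont_on a b f" "\<And>t. t \<in> {a..b} \<Longrightarrow> f t = g t"
  shows "abs_cont_on a b g"
proof (rule abs_cont_onI, goal_cases)
  case (1 e)
  with assms(1) obtain d where "d > 0" and d: "\<And>n s t. nonoverlapping_intervals a b n s t \<Longrightarrow>
     (\<Sum>i<n. t i - s i) < d \<Longrightarrow> (\<Sum>i<n. norm (f (t i) - f (s i))) < e"
    by (rule abs_cont_onE) (rule that)
  have "(\<Sum>i<n. norm (g (t i) - g (s i))) = (\<Sum>i<n. norm (f (t i) - f (s i)))"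
    if "nonoverlapping_intervals a b n s t" for n s t
    using that assms(2) by (intro sum.cong) (auto simp: nonoverlapping_intervals_def)
  with d \<open>d > 0\<close> show ?case by metis
qed

lemma abs_cont_on_subinterval:
  assumes "abs_cont_on a b f" "a \<le> a'" "b' \<le> b"
  shows "abs_cont_on a' b' f"
proof (rule abs_cont_onI, goal_cases)
  case (1 e)
  with assms(1) obtain d where "d > 0" and d: "\<And>n s t. nonoverlapping_intervals a b n s t \<Longrightarrow>
     (\<Sum>i<n. t i - s i) < d \<Longrightarrow> (\<Sum>i<n. norm (f (t i) - f (s i))) < e"
    by (rule abs_cont_onE) (rule that)
  have "nonoverlapping_intervals a b n s t" if "nonoverlapping_intervals a' b' n s t" for n s t
    using that assms(2,3) unfolding nonoverlapping_intervals_def by force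
  with d \<open>d > 0\<close> show ?case by metis
qed

lemma abs_cont_on_dominated:
  fixes f :: "real \<Rightarrow> 'a::real_normed_vector" and g :: "real \<Rightarrow> 'b::real_normed_vector"
    and h :: "real \<Rightarrow> 'c::real_normed_vector"
  assumes f: "abs_cont_on a b f" and g: "abs_cont_on a b g" and "K \<ge> 0"
    and dom: "\<And>s t. s \<in> {a..b} \<Longrightarrow> t \<in> {a..b} \<Longrightarrow>
       norm (h t - h s) \<le> K * (norm (f t - f s) + norm (g t - g s) + \<bar>t - s\<bar>)"
  shows "abs_cont_on a b h"
proof (rule abs_cont_onI, goal_cases)
  case (1 e)
  define e' where "e' = e / (3 * (K + 1))"
  have "e' > 0" and e': "3 * (K + 1) * e' = e"
    using 1 \<open>K \<ge> 0\<close> by (simp_all add: e'_def)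
  obtain d1 where "d1 > 0" and d1: "\<And>n s t. nonoverlapping_intervals a b n s t \<Longrightarrow>
     (\<Sum>i<n. t i - s i) < d1 \<Longrightarrow> (\<Sum>i<n. norm (f (t i) - f (s i))) < e'"
    using f \<open>e' > 0\<close> by (rule abs_cont_onE) (rule that)
  obtain d2 where "d2 > 0" and d2: "\<And>n s t. nonoverlapping_intervals a b n s t \<Longrightarrow>
     (\<Sum>i<n. t i - s i) < d2 \<Longrightarrow> (\<Sum>i<n. norm (g (t i) - g (s i))) < e'"
    using g \<open>e' > 0\<close> by (rule abs_cont_onE) (rule that)
  have "(\<Sum>i<n. norm (h (t i) - h (s i))) < e"
    if st: "nonoverlapping_intervals a b n s t" and small: "(\<Sum>i<n. t i - s i) < min (min d1 d2) e'"
    for n s t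
  proof -
    have "(\<Sum>i<n. norm (h (t i) - h (s i)))
        \<le> (\<Sum>i<n. K * (norm (f (t i) - f (s i)) + norm (g (t i) - g (s i)) + (t i - s i)))"
    proof (rule sum_mono)
      fix i assume "i \<in> {..<n}"
      then have "a \<le> s i" "s i \<le> t i" "t i \<le> b"
        using st by (auto simp: nonoverlapping_intervals_def)
      then show "norm (h (t i) - h (s i)) \<le> K * (norm (f (t i) - f (s i)) + norm (g (t i) - g (s i)) + (t i - s i))"
        using dom[of "s i" "t i"] by simp
    qed
    also have "\<dots> = K * ((\<Sum>i<n. norm (f (t i) - f (s i))) + (\<Sum>i<n. norm (g (t i) - g (s i)))
        + (\<Sum>i<n. t i - s i))"
      by (simp add: sum_distrib_left sum.distrib distrib_left)
    also have "\<dots> \<le> K * (3 * e')"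
    proof (rule mult_left_mono[OF _ \<open>K \<ge> 0\<close>])
      have "(\<Sum>i<n. norm (f (t i) - f (s i))) < e'" "(\<Sum>i<n. norm (g (t i) - g (s i))) < e'"
          "(\<Sum>i<n. t i - s i) < e'"
        using d1[OF st] d2[OF st] small by simp_all
      then show "(\<Sum>i<n. norm (f (t i) - f (s i))) + (\<Sum>i<n. norm (g (t i) - g (s i)))
          + (\<Sum>i<n. t i - s i) \<le> 3 * e'"
        by linarith
    qed
    also have "\<dots> < e"
      using e' \<open>e' > 0\<close> by (simp add: algebra_simps)
    finally show ?thesis .
  qed
  moreover have "min (min d1 d2) e' > 0"
    using \<open>d1 > 0\<close> \<open>d2 > 0\<close> \<open>e' > 0\<close> by simp
  ultimately show ?case by blast
qed

lemma abs_cont_on_const: "abs_cont_on a b (\<lambda>t. c)"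
  unfolding abs_cont_on_iff by (auto intro: exI[of _ 1])

lemma abs_cont_on_lipschitz:
  fixes h :: "real \<Rightarrow> 'a::real_normed_vector"
  assumes "K \<ge> 0" "\<And>s t. s \<in> {a..b} \<Longrightarrow> t \<in> {a..b} \<Longrightarrow> norm (h t - h s) \<le> K * \<bar>t - s\<bar>"
  shows "abs_cont_on a b h"
  using assms
  by (intro abs_cont_on_dominated[OF abs_cont_on_const[of a b 0] abs_cont_on_const[of a b 0]]) auto

lemma abs_cont_on_add:
  fixes f g :: "real \<Rightarrow> 'a::real_normed_vector"
  assumes "abs_cont_on a b f" "abs_cont_on a b g"
  shows "abs_cont_on a b (\<lambda>t. f t + g t)"
proof (rule abs_cont_on_dominated[OF assms, where K = 1])
  fix s t
  have "norm (f t + g t - (f s + g s)) \<le> norm (f t - f s) + norm (g t - g s)"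
    by (metis add_diff_add norm_triangle_ineq)
  then show "norm (f t + g t - (f s + g s)) \<le> 1 * (norm (f t - f s) + norm (g t - g s) + \<bar>t - s\<bar>)"
    by simp
qed simp

lemma abs_cont_on_bounded_linear:
  fixes f :: "real \<Rightarrow> 'a::real_normed_vector"
  assumes "abs_cont_on a b f" "bounded_linear L"
  shows "abs_cont_on a b (\<lambda>t. L (f t))"
proof -
  obtain K where "K \<ge> 0" and K: "\<And>x. norm (L x) \<le> norm x * K"
    using bounded_linear.nonneg_bounded[OF assms(2)] by blast
  show ?thesis
  proof (rule abs_cont_on_dominated[OF assms(1) abs_cont_on_const[of a b 0] \<open>K \<ge> 0\<close>])
    fix s t
    have "norm (L (f t) - L (f s)) \<le> norm (f t - f s) * K"
      using K[of "f t - f s"] linear_diff[OF bounded_linear.linear[OF assms(2)]] by simp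
    moreover have "0 \<le> K * \<bar>t - s\<bar>"
      using \<open>K \<ge> 0\<close> by simp
    ultimately show "norm (L (f t) - L (f s)) \<le> K * (norm (f t - f s) + norm ((0::real) - 0) + \<bar>t - s\<bar>)"
      by (simp add: algebra_simps)
  qed
qed

lemma abs_cont_on_diff:
  fixes f g :: "real \<Rightarrow> 'a::real_normed_vector"
  assumes "abs_cont_on a b f" "abs_cont_on a b g"
  shows "abs_cont_on a b (\<lambda>t. f t - g t)"
  using abs_cont_on_add[OF assms(1) abs_cont_on_bounded_linear[OF assms(2) bounded_linear_minus[OF bounded_linear_ident]]]
  by simp

lemma nonoverlapping_intervals_image:
  assumes "nonoverlapping_intervals a b n s t" "mono \<phi>"
  shows "nonoverlapping_intervals (\<phi> a) (\<phi> b) n (\<lambda>i. \<phi> (s i)) (\<lambda>i. \<phi> (t i))"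
  using assms unfolding nonoverlapping_intervals_def mono_def by meson

lemma clip_diff_eq:
  fixes f :: "real \<Rightarrow> 'a::ab_group_add"
  assumes "s \<le> t"
  shows "f t - f s = (f (min t m) - f (min s m)) + (f (max t m) - f (max s m))"
  using assms by (cases "t \<le> m"; cases "s \<le> m") (auto simp: min_def max_def)

lemma abs_cont_on_glue:
  fixes f :: "real \<Rightarrow> 'a::real_normed_vector"
  assumes f1: "abs_cont_on a m f" and f2: "abs_cont_on m b f" and "a \<le> m" "m \<le> b"
  shows "abs_cont_on a b f"
proof (rule abs_cont_onI, goal_cases)
  case (1 e)
  then have "e / 2 > 0" by simp
  obtain d1 where "d1 > 0" and d1: "\<And>n s t. nonoverlapping_intervals a m n s t \<Longrightarrow>
     (\<Sum>i<n. t i - s i) < d1 \<Longrightarrow> (\<Sum>i<n. norm (f (t i) - f (s i))) < e / 2"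
    using f1 \<open>e / 2 > 0\<close> by (rule abs_cont_onE) (rule that)
  obtain d2 where "d2 > 0" and d2: "\<And>n s t. nonoverlapping_intervals m b n s t \<Longrightarrow>
     (\<Sum>i<n. t i - s i) < d2 \<Longrightarrow> (\<Sum>i<n. norm (f (t i) - f (s i))) < e / 2"
    using f2 \<open>e / 2 > 0\<close> by (rule abs_cont_onE) (rule that)
  have "(\<Sum>i<n. norm (f (t i) - f (s i))) < e"
    if st: "nonoverlapping_intervals a b n s t" and small: "(\<Sum>i<n. t i - s i) < min d1 d2" for n s t
  proof -
    let ?s1 = "\<lambda>i. min (s i) m" and ?t1 = "\<lambda>i. min (t i) m"
    let ?s2 = "\<lambda>i. max (s i) m" and ?t2 = "\<lambda>i. max (t i) m"
    have ord: "\<And>i. i < n \<Longrightarrow> s i \<le> t i"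
      using st by (auto simp: nonoverlapping_intervals_def)
    have "mono (\<lambda>x. min x m)" "mono (\<lambda>x. max x m)"
      by (auto intro!: monoI)
    from this[THEN nonoverlapping_intervals_image[OF st]] \<open>a \<le> m\<close> \<open>m \<le> b\<close>
    have st1: "nonoverlapping_intervals a m n ?s1 ?t1" and st2: "nonoverlapping_intervals m b n ?s2 ?t2"
      by (simp_all add: min.absorb1 min.absorb2 max.absorb1 max.absorb2)
    have "?t1 i - ?s1 i \<le> t i - s i" "?t2 i - ?s2 i \<le> t i - s i" if "i < n" for i
      using ord[OF that] by (auto simp: min_def max_def)
    then have "(\<Sum>i<n. ?t1 i - ?s1 i) \<le> (\<Sum>i<n. t i - s i)" "(\<Sum>i<n. ?t2 i - ?s2 i) \<le> (\<Sum>i<n. t i - s i)"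
      by (auto intro: sum_mono)
    with small have "(\<Sum>i<n. norm (f (?t1 i) - f (?s1 i))) < e / 2" "(\<Sum>i<n. norm (f (?t2 i) - f (?s2 i))) < e / 2"
      using d1[OF st1] d2[OF st2] by auto
    moreover have "(\<Sum>i<n. norm (f (t i) - f (s i)))
        \<le> (\<Sum>i<n. norm (f (?t1 i) - f (?s1 i))) + (\<Sum>i<n. norm (f (?t2 i) - f (?s2 i)))"
      unfolding sum.distrib[symmetric]
    proof (rule sum_mono)
      fix i assume "i \<in> {..<n}"
      then show "norm (f (t i) - f (s i)) \<le> norm (f (?t1 i) - f (?s1 i)) + norm (f (?t2 i) - f (?s2 i))"
        using clip_diff_eq[OF ord, of i f m] by (simp add: norm_triangle_ineq)
    qed
    ultimately show ?thesis by linarith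
  qed
  moreover have "min d1 d2 > 0" using \<open>d1 > 0\<close> \<open>d2 > 0\<close> by simp
  ultimately show ?case by blast
qed

lemma abs_cont_on_imp_continuous_on:
  fixes f :: "real \<Rightarrow> 'a::real_normed_vector"
  assumes "abs_cont_on a b f"
  shows "continuous_on {a..b} f"
  unfolding continuous_on_iff
proof (intro ballI allI impI)
  fix x e :: real assume x: "x \<in> {a..b}" and "e > 0"
  obtain d where "d > 0" and d: "\<And>n s t. nonoverlapping_intervals a b n s t \<Longrightarrow>
     (\<Sum>i<n. t i - s i) < d \<Longrightarrow> (\<Sum>i<n. norm (f (t i) - f (s i))) < e"
    using assms \<open>e > 0\<close> by (rule abs_cont_onE) (rule that)
  have "dist (f y) (f x) < e" if "y \<in> {a..b}" "dist y x < d" for y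
    using d[of 1 "\<lambda>_. min x y" "\<lambda>_. max x y"] that x
    by (cases "x \<le> y") (auto simp: nonoverlapping_intervals_def dist_norm norm_minus_commute)
  with \<open>d > 0\<close> show "\<exists>d>0. \<forall>y\<in>{a..b}. dist y x < d \<longrightarrow> dist (f y) (f x) < e"
    by blast
qed

lemma disjoint_open_intervals_separated:
  fixes u v u' v' :: real
  assumes "u < v" "u' < v'" "{u<..<v} \<inter> {u'<..<v'} = {}"
  shows "v \<le> u' \<or> v' \<le> u"
proof (rule ccontr)
  assume "\<not> ?thesis"
  with assms(1,2) have "(max u u' + min v v') / 2 \<in> {u<..<v} \<inter> {u'<..<v'}"
    by (auto simp: max_def min_def)
  with assms(3) show False by blast
qed

lemma division_of_real_interval:
  fixes K :: "real set"
  assumes "\<D> division_of S" "K \<in> \<D>"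
  shows "K = {Inf K..Sup K}" "Inf K \<le> Sup K" "Inf K \<in> K" "Sup K \<in> K"
    "measure lebesgue K = Sup K - Inf K"
proof -
  obtain u v where K: "K = {u..v}"
    using division_ofD(4)[OF assms] by (metis box_real(2))
  with division_ofD(3)[OF assms] have "u \<le> v" by auto
  with K show "K = {Inf K..Sup K}" "Inf K \<le> Sup K" "Inf K \<in> K" "Sup K \<in> K"
    "measure lebesgue K = Sup K - Inf K"
    by simp_all
qed

lemma abs_cont_on_division:
  fixes f :: "real \<Rightarrow> 'a::real_normed_vector"
  assumes "abs_cont_on a b f" "e > 0"
  obtains d where "d > 0"
    "\<And>\<D>. \<D> division_of \<Union>\<D> \<Longrightarrow> \<Union>\<D> \<subseteq> {a..b} \<Longrightarrow> measure lebesgue (\<Union>\<D>) < d \<Longrightarrow>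
       (\<Sum>K\<in>\<D>. norm (f (Sup K) - f (Inf K))) < e"
proof -
  obtain d where "d > 0" and d: "\<And>n s t. nonoverlapping_intervals a b n s t \<Longrightarrow>
     (\<Sum>i<n. t i - s i) < d \<Longrightarrow> (\<Sum>i<n. norm (f (t i) - f (s i))) < e"
    using assms by (rule abs_cont_onE) (rule that)
  have "(\<Sum>K\<in>\<D>. norm (f (Sup K) - f (Inf K))) < e"
    if \<D>: "\<D> division_of \<Union>\<D>" and sub: "\<Union>\<D> \<subseteq> {a..b}" and small: "measure lebesgue (\<Union>\<D>) < d" for \<D>
  proof -
    note interval = division_of_real_interval[OF \<D>]
    define \<D>' where "\<D>' = {K \<in> \<D>. Inf K < Sup K}"
    have "finite \<D>'" "\<D>' \<subseteq> \<D>"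
      using division_ofD(1)[OF \<D>] by (auto simp: \<D>'_def)
    then obtain h where h: "bij_betw h {..<card \<D>'} \<D>'"
      using ex_bij_betw_nat_finite atLeast0LessThan by metis
    let ?s = "\<lambda>i. Inf (h i)" and ?t = "\<lambda>i. Sup (h i)"
    have hD: "h i \<in> \<D>" "?s i < ?t i" if "i < card \<D>'" for i
      using bij_betwE[OF h] that by (auto simp: \<D>'_def)
    have "a \<le> ?s i \<and> ?s i \<le> ?t i \<and> ?t i \<le> b" if i: "i < card \<D>'" for i
    proof -
      have "{?s i..?t i} \<subseteq> {a..b}"
        using hD(1)[OF i] interval(1)[OF hD(1)[OF i]] sub by blast
      then show ?thesis
        using hD(2)[OF i] by auto
    qed
    moreover have "?t i \<le> ?s j \<or> ?t j \<le> ?s i" if i: "i < card \<D>'" and j: "j < card \<D>'" and "i \<noteq> j" for i j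
    proof -
      have "h i \<noteq> h j"
        using h i j \<open>i \<noteq> j\<close> unfolding bij_betw_def inj_on_def by auto
      then have "interior (h i) \<inter> interior (h j) = {}"
        using division_ofD(5)[OF \<D> hD(1)[OF i] hD(1)[OF j]] by simp
      then have "{?s i<..<?t i} \<inter> {?s j<..<?t j} = {}"
        using interval(1)[OF hD(1)[OF i]] interval(1)[OF hD(1)[OF j]] by (metis interior_atLeastAtMost_real)
      then show ?thesis
        using disjoint_open_intervals_separated hD(2) i j by blast
    qed
    ultimately have "nonoverlapping_intervals a b (card \<D>') ?s ?t"
      unfolding nonoverlapping_intervals_def by blast
    moreover have "(\<Sum>i<card \<D>'. ?t i - ?s i) < d"
    proof -
      have "(\<Sum>i<card \<D>'. ?t i - ?s i) = (\<Sum>K\<in>\<D>'. measure lebesgue K)"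
        using sum.reindex_bij_betw[OF h, of "\<lambda>K. Sup K - Inf K"] interval(5) \<open>\<D>' \<subseteq> \<D>\<close>
        by (auto intro!: sum.cong)
      also have "\<dots> \<le> (\<Sum>K\<in>\<D>. measure lebesgue K)"
        using \<open>\<D>' \<subseteq> \<D>\<close> division_ofD(1)[OF \<D>] by (intro sum_mono2) auto
      also have "\<dots> = measure lebesgue (\<Union>\<D>)"
        using content_division[OF \<D>] .
      finally show ?thesis using small by linarith
    qed
    ultimately have "(\<Sum>i<card \<D>'. norm (f (?t i) - f (?s i))) < e"
      by (rule d)
    moreover have "(\<Sum>i<card \<D>'. norm (f (?t i) - f (?s i))) = (\<Sum>K\<in>\<D>. norm (f (Sup K) - f (Inf K)))"
    proof -
      have "(\<Sum>i<card \<D>'. norm (f (?t i) - f (?s i))) = (\<Sum>K\<in>\<D>'. norm (f (Sup K) - f (Inf K)))"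
        using sum.reindex_bij_betw[OF h, of "\<lambda>K. norm (f (Sup K) - f (Inf K))"] by simp
      also have "\<dots> = (\<Sum>K\<in>\<D>. norm (f (Sup K) - f (Inf K)))"
        using \<open>\<D>' \<subseteq> \<D>\<close> division_ofD(1)[OF \<D>] interval
        by (intro sum.mono_neutral_left) (fastforce simp: \<D>'_def)+
      finally show ?thesis .
    qed
    ultimately show ?thesis by simp
  qed
  with \<open>d > 0\<close> show ?thesis using that by blast
qed

lemma negligible_small_open_superset:
  assumes "negligible N" "d > 0"
  obtains U where "open U" "N \<subseteq> U" "U \<in> lmeasurable" "measure lebesgue U < d"
proof -
  have N: "N \<in> lmeasurable" "measure lebesgue N = 0"
    using assms(1) negligible_iff_measure by blast+
  then obtain U where U: "open U" "N \<subseteq> U" "U - N \<in> lmeasurable" "emeasure lebesgue (U - N) < ennreal d"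
    using sets_lebesgue_outer_open[OF fmeasurableD[OF N(1)] assms(2)] by blast
  have "U = (U - N) \<union> N"
    using U(2) by blast
  then have "U \<in> lmeasurable" "measure lebesgue U \<le> measure lebesgue (U - N) + measure lebesgue N"
    using U(3) N(1) by (metis fmeasurable.Un, metis measure_Un_le fmeasurableD)
  moreover have "measure lebesgue (U - N) < d"
    using U(3,4) assms(2) by (simp add: emeasure_eq_measure2 ennreal_less_iff)
  ultimately show ?thesis
    using that U(1,2) N(2) by fastforce
qed

lemma tagged_division_of_real_inj_on_snd:
  fixes p :: "(real \<times> real set) set"
  assumes p: "p tagged_division_of S"
  shows "inj_on snd p"
proof (rule inj_onI)
  fix xK yL assume xK: "xK \<in> p" and yL: "yL \<in> p" and eq: "snd xK = snd yL"
  obtain x K y L where xK_def: "xK = (x, K)" and yL_def: "yL = (y, L)"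
    by (cases xK, cases yL)
  show "xK = yL"
  proof (rule ccontr)
    assume "xK \<noteq> yL"
    then have "interior K = {}"
      using tagged_division_ofD(5)[OF p] xK yL eq unfolding xK_def yL_def by fastforce
    moreover obtain u v where K: "K = {u..v}"
      using tagged_division_ofD(4)[OF p] xK unfolding xK_def by (metis box_real(2))
    moreover have "x \<in> K" "y \<in> K"
      using tagged_division_ofD(2)[OF p] xK yL eq unfolding xK_def yL_def by auto
    ultimately have "x = y"
      by auto
    with \<open>xK \<noteq> yL\<close> eq show False
      unfolding xK_def yL_def by simp
  qed
qed

lemma abs_cont_on_derivative_zero_imp_eq:
  fixes f :: "real \<Rightarrow> 'a::real_normed_vector"
  assumes f: "abs_cont_on a b f" and "a \<le> b" and N: "negligible N"
    and f': "\<And>t. t \<in> {a..b} - N \<Longrightarrow> (f has_vector_derivative 0) (at t)"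
  shows "f b = f a"
proof -
  have small: "norm (f b - f a) \<le> e * (1 + (b - a))" if "e > 0" for e
  proof -
    obtain d where "d > 0" and d: "\<And>\<D>. \<D> division_of \<Union>\<D> \<Longrightarrow> \<Union>\<D> \<subseteq> {a..b} \<Longrightarrow>
        measure lebesgue (\<Union>\<D>) < d \<Longrightarrow> (\<Sum>K\<in>\<D>. norm (f (Sup K) - f (Inf K))) < e"
      using f \<open>e > 0\<close> by (rule abs_cont_on_division) (rule that)
    obtain U where "open U" "N \<subseteq> U" "U \<in> lmeasurable" "measure lebesgue U < d"
      using N \<open>d > 0\<close> by (rule negligible_small_open_superset)
    have "\<exists>r>0. (t \<in> N \<longrightarrow> ball t r \<subseteq> U) \<and>
        (t \<in> {a..b} - N \<longrightarrow> (\<forall>y. dist y t < r \<longrightarrow> norm (f y - f t) \<le> e * dist y t))" for t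
    proof (cases "t \<in> {a..b} - N")
      case True
      then have "(f has_derivative (\<lambda>h. 0)) (at t)"
        using f' by (simp add: has_vector_derivative_def)
      then obtain r where "r > 0" "\<forall>y. norm (y - t) < r \<longrightarrow> norm (f y - f t - 0) \<le> e * norm (y - t)"
        using \<open>e > 0\<close> unfolding has_derivative_at_alt by blast
      with True show ?thesis
        by (auto simp: dist_norm)
    next
      case False
      show ?thesis
      proof (cases "t \<in> N")
        case True
        with \<open>open U\<close> \<open>N \<subseteq> U\<close> obtain r where "r > 0" "ball t r \<subseteq> U"
          using open_contains_ball by blast
        with False show ?thesis by blast
      qed (use False in \<open>auto intro: exI[of _ 1]\<close>)
    qed
    then obtain r where r: "\<And>t. r t > 0" "\<And>t. t \<in> N \<Longrightarrow> ball t (r t) \<subseteq> U"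
      "\<And>t y. t \<in> {a..b} - N \<Longrightarrow> dist y t < r t \<Longrightarrow> norm (f y - f t) \<le> e * dist y t"
      by metis
    obtain p where p: "p tagged_division_of {a..b}" and fine: "(\<lambda>t. ball t (r t)) fine p"
      using fine_division_exists_real[OF gauge_ball_dependent] r(1) by metis
    have tag: "K = {Inf K..Sup K}" "Inf K \<le> x" "x \<le> Sup K" "K \<subseteq> ball x (r x)" "K \<subseteq> {a..b}"
      "x \<in> {a..b}" "Inf K \<in> K" "Sup K \<in> K" if "(x, K) \<in> p" for x K
    proof -
      have "K \<in> snd ` p"
        using that by force
      then show K: "K = {Inf K..Sup K}" "Inf K \<in> K" "Sup K \<in> K"
        using division_of_real_interval(1,3,4)[OF division_of_tagged_division[OF p]] by blast+
      show "K \<subseteq> ball x (r x)" "K \<subseteq> {a..b}"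
        using fine that tagged_division_ofD(3)[OF p that] unfolding fine_def by auto
      have "x \<in> K"
        using tagged_division_ofD(2)[OF p that] .
      then show "Inf K \<le> x" "x \<le> Sup K"
        by (subst (asm) K(1), simp)+
      show "x \<in> {a..b}"
        using \<open>x \<in> K\<close> tagged_division_ofD(3)[OF p that] by blast
    qed
    define bad where "bad = {(x, K) \<in> p. x \<in> N}"
    have "finite p" "bad \<subseteq> p"
      using p by (auto simp: bad_def)
    let ?g = "\<lambda>(x::real, K). norm (f (Sup K) - f (Inf K))"
    have "norm (f b - f a) = norm (\<Sum>(x, K)\<in>p. f (Sup K) - f (Inf K))"
      using additive_tagged_division_1[OF \<open>a \<le> b\<close> p, of f] by simp
    also have "\<dots> \<le> sum ?g p"
      by (rule norm_sum[THEN order_trans]) (simp add: split_def)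
    also have "\<dots> = sum ?g bad + sum ?g (p - bad)"
      using \<open>finite p\<close> \<open>bad \<subseteq> p\<close> by (simp add: sum.subset_diff)
    also have "sum ?g bad < e"
    proof -
      have inj: "inj_on snd bad"
        using tagged_division_of_real_inj_on_snd[OF p] \<open>bad \<subseteq> p\<close> by (rule inj_on_subset)
      have "snd ` p division_of \<Union>(snd ` p)"
        using division_of_tagged_division[OF p] by (metis division_ofD(6))
      then have div: "snd ` bad division_of \<Union>(snd ` bad)"
        by (rule division_of_subset) (use \<open>bad \<subseteq> p\<close> in blast)
      have sub: "\<Union>(snd ` bad) \<subseteq> U" "\<Union>(snd ` bad) \<subseteq> {a..b}"
        using tag(4,5) r(2) unfolding bad_def by fastforce+
      have "measure lebesgue (\<Union>(snd ` bad)) \<le> measure lebesgue U"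
        using sub(1) lmeasurable_division[OF div] \<open>U \<in> lmeasurable\<close>
        by (intro measure_mono_fmeasurable) auto
      then have "(\<Sum>K\<in>snd ` bad. norm (f (Sup K) - f (Inf K))) < e"
        using d[OF div sub(2)] \<open>measure lebesgue U < d\<close> by linarith
      then show ?thesis
        by (simp add: sum.reindex[OF inj] split_def)
    qed
    also have "sum ?g (p - bad) \<le> (\<Sum>(x, K)\<in>p. e * (Sup K - Inf K))"
    proof -
      have "?g (x, K) \<le> e * (Sup K - Inf K)" if "(x, K) \<in> p - bad" for x K
      proof -
        have xK: "(x, K) \<in> p" "x \<in> {a..b} - N"
          using that tag[of x K] unfolding bad_def by auto
        have "dist (Sup K) x < r x" "dist (Inf K) x < r x"
          using tag(4,7,8)[OF xK(1)] by (auto simp: dist_commute)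
        then have "norm (f (Sup K) - f x) \<le> e * dist (Sup K) x" "norm (f (Inf K) - f x) \<le> e * dist (Inf K) x"
          by (simp_all add: r(3)[OF xK(2)])
        moreover have "dist (Sup K) x = Sup K - x" "dist (Inf K) x = x - Inf K"
          using tag(2,3)[OF xK(1)] by (simp_all add: dist_real_def)
        moreover have "norm (f (Sup K) - f (Inf K)) \<le> norm (f (Sup K) - f x) + norm (f (Inf K) - f x)"
          using norm_triangle_ineq4[of "f (Sup K) - f x" "f (Inf K) - f x"] by simp
        ultimately show ?thesis
          by (simp add: algebra_simps)
      qed
      then have "sum ?g (p - bad) \<le> (\<Sum>(x, K)\<in>p - bad. e * (Sup K - Inf K))"
        by (intro sum_mono) auto
      also have "\<dots> \<le> (\<Sum>(x, K)\<in>p. e * (Sup K - Inf K))"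
        using \<open>finite p\<close> tag(2,3) \<open>e > 0\<close> by (intro sum_mono2) force+
      finally show ?thesis .
    qed
    also have "(\<Sum>(x, K)\<in>p. e * (Sup K - Inf K)) = e * (b - a)"
      using additive_tagged_division_1[OF \<open>a \<le> b\<close> p, of id]
      by (simp add: sum_distrib_left[symmetric] split_def)
    finally show ?thesis
      by (simp add: algebra_simps)
  qed
  have "norm (f b - f a) \<le> 0"
  proof (rule field_le_epsilon)
    fix e :: real assume "e > 0"
    with \<open>a \<le> b\<close> have "e / (1 + (b - a)) > 0" by simp
    from small[OF this] \<open>a \<le> b\<close> show "norm (f b - f a) \<le> 0 + e" by simp
  qed
  then show ?thesis by simp
qed

lemma inner_X1: "l \<bullet> X1 p = fst l - snd (snd l) * fst (snd p) / 2"
  by (cases l; cases p) (simp add: X1_def)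

lemma inner_X2: "l \<bullet> X2 p = fst (snd l) + snd (snd l) * fst p / 2"
  by (cases l; cases p) (simp add: X2_def)

lemma X1_X2_combination: "d1 *\<^sub>R X1 p + d2 *\<^sub>R X2 p = (d1, d2, (d2 * fst p - d1 * fst (snd p)) / 2)"
  by (cases p) (simp add: X1_def X2_def algebra_simps add_divide_distrib diff_divide_distrib)

definition flow :: "R3 \<Rightarrow> real \<Rightarrow> real \<Rightarrow> real \<Rightarrow> R3" where
  "flow p d1 d2 s = (fst p + d1 * s, fst (snd p) + d2 * s,
                     snd (snd p) + s * (d2 * fst p - d1 * fst (snd p)) / 2)"

lemma flow_0 [simp]: "flow p d1 d2 0 = p"
  by (simp add: flow_def)

lemma flow_has_vector_derivative:
  "((\<lambda>t. flow p d1 d2 (t - r)) has_vector_derivative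
     d1 *\<^sub>R X1 (flow p d1 d2 (t - r)) + d2 *\<^sub>R X2 (flow p d1 d2 (t - r))) (at t)"
proof -
  have "((\<lambda>t. flow p d1 d2 (t - r)) has_vector_derivative
      (d1, d2, (d2 * fst p - d1 * fst (snd p)) / 2)) (at t)"
    unfolding flow_def
    by (intro has_vector_derivative_Pair)
       (auto intro!: derivative_eq_intros simp: has_real_derivative_iff_has_vector_derivative[symmetric])
  moreover have "d1 *\<^sub>R X1 (flow p d1 d2 (t - r)) + d2 *\<^sub>R X2 (flow p d1 d2 (t - r)) =
      (d1, d2, (d2 * fst p - d1 * fst (snd p)) / 2)"
    unfolding X1_X2_combination by (simp add: flow_def algebra_simps)
  ultimately show ?thesis by simp
qed

lemma norm_triple_le: "norm ((a, b, c) :: R3) \<le> \<bar>a\<bar> + \<bar>b\<bar> + \<bar>c\<bar>"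
  using norm_Pair_le[of a "(b, c)"] norm_Pair_le[of b c] by simp

lemma abs_cont_on_flow: "abs_cont_on a b (\<lambda>t. flow p d1 d2 (t - r))"
proof (rule abs_cont_on_lipschitz)
  let ?K = "\<bar>d1\<bar> + \<bar>d2\<bar> + \<bar>d2 * fst p - d1 * fst (snd p)\<bar>"
  show "?K \<ge> 0" by simp
  fix s t
  have "flow p d1 d2 (t - r) - flow p d1 d2 (s - r) =
      (d1 * (t - s), d2 * (t - s), (t - s) * (d2 * fst p - d1 * fst (snd p)) / 2)"
    by (simp add: flow_def field_simps)
  then have "norm (flow p d1 d2 (t - r) - flow p d1 d2 (s - r)) \<le>
      \<bar>d1\<bar> * \<bar>t - s\<bar> + \<bar>d2\<bar> * \<bar>t - s\<bar> + \<bar>t - s\<bar> * \<bar>d2 * fst p - d1 * fst (snd p)\<bar> / 2"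
    using norm_triple_le[of "d1 * (t - s)" "d2 * (t - s)" "(t - s) * (d2 * fst p - d1 * fst (snd p)) / 2"]
    by (simp add: abs_mult)
  also have "\<dots> \<le> ?K * \<bar>t - s\<bar>"
    by (simp add: algebra_simps)
  finally show "norm (flow p d1 d2 (t - r) - flow p d1 d2 (s - r)) \<le> ?K * \<bar>t - s\<bar>" .
qed

lemma admissible_restrict:
  assumes "admissible T \<gamma> u1 u2" "0 \<le> T'" "T' \<le> T"
  shows "admissible T' \<gamma> u1 u2"
proof -
  have "{0..T'} \<subseteq> {0..T}"
    using assms(3) by auto
  with assms show ?thesis
    unfolding admissible_def
    by (auto intro: abs_cont_on_subinterval measurable_restrict_mono elim!: AE_mp)
qed

lemma measurable_extend_control:
  fixes u :: "real \<Rightarrow> real"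
  assumes "u \<in> borel_measurable (restrict_space lebesgue {0..T})"
  shows "(\<lambda>t. if t \<le> T then u t else c) \<in> borel_measurable (restrict_space lebesgue {0..T'})"
proof (subst measurable_If_restrict_space_iff, goal_cases)
  case 1
  have "{t \<in> space (restrict_space lebesgue {0..T'}). t \<le> T} = {0..min T T'}"
    by (auto simp: min_def)
  then show ?case
    by (simp add: sets_restrict_space_iff)
next
  case 2
  have "restrict_space (restrict_space lebesgue {0..T'}) {t. t \<le> T} = restrict_space lebesgue ({0..T'} \<inter> {t. t \<le> T})"
    by (rule restrict_restrict_space) (auto simp: sets_restrict_space_iff)
  moreover have "u \<in> borel_measurable (restrict_space lebesgue ({0..T'} \<inter> {t. t \<le> T}))"
    using assms by (rule measurable_restrict_mono) auto
  ultimately show ?case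
    by simp
qed

definition extend_by_flow :: "(real \<Rightarrow> R3) \<Rightarrow> real \<Rightarrow> real \<Rightarrow> real \<Rightarrow> real \<Rightarrow> R3" where
  "extend_by_flow \<gamma> T d1 d2 t = (if t \<le> T then \<gamma> t else flow (\<gamma> T) d1 d2 (t - T))"

definition extend_control :: "(real \<Rightarrow> real) \<Rightarrow> real \<Rightarrow> real \<Rightarrow> real \<Rightarrow> real" where
  "extend_control u T d t = (if t \<le> T then u t else d)"

lemma extend_by_flow_start: "0 \<le> T \<Longrightarrow> extend_by_flow \<gamma> T d1 d2 0 = \<gamma> 0"
  by (simp add: extend_by_flow_def)

lemma extend_by_flow_end: "0 \<le> h \<Longrightarrow> extend_by_flow \<gamma> T d1 d2 (T + h) = flow (\<gamma> T) d1 d2 h"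
  by (cases "h = 0") (auto simp: extend_by_flow_def)

lemma admissible_extend_by_flow:
  assumes adm: "admissible T \<gamma> u1 u2" and "\<bar>d1\<bar> \<le> 1" "\<bar>d2\<bar> \<le> 1" "0 \<le> h"
  shows "admissible (T + h) (extend_by_flow \<gamma> T d1 d2) (extend_control u1 T d1) (extend_control u2 T d2)"
proof -
  let ?\<psi> = "extend_by_flow \<gamma> T d1 d2"
  from adm have "0 \<le> T" and \<gamma>: "abs_cont_on 0 T \<gamma>"
    and u1: "u1 \<in> borel_measurable (restrict_space lebesgue {0..T})"
    and u2: "u2 \<in> borel_measurable (restrict_space lebesgue {0..T})"
    and ae: "AE t in lebesgue. t \<in> {0..T} \<longrightarrow> \<bar>u1 t\<bar> \<le> 1 \<and> \<bar>u2 t\<bar> \<le> 1 \<and>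
        (\<gamma> has_vector_derivative (u1 t *\<^sub>R X1 (\<gamma> t) + u2 t *\<^sub>R X2 (\<gamma> t))) (at t)"
    unfolding admissible_def by auto
  have "abs_cont_on 0 T ?\<psi>"
    using \<gamma> by (rule abs_cont_on_cong) (simp add: extend_by_flow_def)
  moreover have "flow (\<gamma> T) d1 d2 (t - T) = ?\<psi> t" if "T \<le> t" for t
    using that by (cases "t = T") (auto simp: extend_by_flow_def)
  then have "abs_cont_on T (T + h) ?\<psi>"
    by (intro abs_cont_on_cong[OF abs_cont_on_flow[of T "T + h" "\<gamma> T" d1 d2 T]]) simp
  ultimately have "abs_cont_on 0 (T + h) ?\<psi>"
    by (rule abs_cont_on_glue) (use \<open>0 \<le> T\<close> \<open>0 \<le> h\<close> in simp_all)
  moreover have left: "(?\<psi> has_vector_derivative u1 t *\<^sub>R X1 (?\<psi> t) + u2 t *\<^sub>R X2 (?\<psi> t)) (at t)"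
    if "(\<gamma> has_vector_derivative u1 t *\<^sub>R X1 (\<gamma> t) + u2 t *\<^sub>R X2 (\<gamma> t)) (at t)" "t < T" for t
  proof -
    have "(?\<psi> has_vector_derivative u1 t *\<^sub>R X1 (\<gamma> t) + u2 t *\<^sub>R X2 (\<gamma> t)) (at t)"
      using that(1)
      by (rule has_vector_derivative_transform_within_open[of _ _ _ "{..<T}"])
         (use that(2) in \<open>auto simp: extend_by_flow_def\<close>)
    with that(2) show ?thesis
      by (simp add: extend_by_flow_def)
  qed
  moreover have right: "(?\<psi> has_vector_derivative d1 *\<^sub>R X1 (?\<psi> t) + d2 *\<^sub>R X2 (?\<psi> t)) (at t)"
    if "T < t" for t
  proof -
    have "(?\<psi> has_vector_derivative d1 *\<^sub>R X1 (flow (\<gamma> T) d1 d2 (t - T)) + d2 *\<^sub>R X2 (flow (\<gamma> T) d1 d2 (t - T))) (at t)"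
      using flow_has_vector_derivative
      by (rule has_vector_derivative_transform_within_open[of _ _ _ "{T<..}"])
         (use that in \<open>auto simp: extend_by_flow_def\<close>)
    with that show ?thesis
      by (simp add: extend_by_flow_def)
  qed
  have "AE t in lebesgue. t \<noteq> T"
    by (rule AE_I'[of "{T}"]) auto
  with ae have "AE t in lebesgue. t \<in> {0..T + h} \<longrightarrow> \<bar>extend_control u1 T d1 t\<bar> \<le> 1 \<and>
      \<bar>extend_control u2 T d2 t\<bar> \<le> 1 \<and> (?\<psi> has_vector_derivative
        (extend_control u1 T d1 t *\<^sub>R X1 (?\<psi> t) + extend_control u2 T d2 t *\<^sub>R X2 (?\<psi> t))) (at t)"
    by eventually_elim
      (use left right \<open>\<bar>d1\<bar> \<le> 1\<close> \<open>\<bar>d2\<bar> \<le> 1\<close> in \<open>auto simp: extend_control_def\<close>)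
  moreover have "extend_control u1 T d1 \<in> borel_measurable (restrict_space lebesgue {0..T + h})"
    "extend_control u2 T d2 \<in> borel_measurable (restrict_space lebesgue {0..T + h})"
    unfolding extend_control_def using u1 u2 by (simp_all add: measurable_extend_control)
  ultimately show ?thesis
    using \<open>0 \<le> T\<close> \<open>0 \<le> h\<close> unfolding admissible_def by simp
qed

lemma flow_six_arcs_eq_four_arcs:
  assumes "R * R = \<tau> * \<tau> + e1 * e2"
  shows "flow (flow (flow (flow (flow (flow q a b e1) (- s * b) (s * a) \<tau>) (- a) (- b) \<tau>)
             (s * b) (- s * a) \<tau>) a b \<tau>) (- s * b) (s * a) e2
       = flow (flow (flow (flow q (s * b) (- s * a) (R - e2)) a b R) (- s * b) (s * a) R) (- a) (- b) (R - e1)"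
proof -
  obtain x y z where q: "q = (x, y, z)"
    by (cases q)
  let ?L = "flow (flow (flow (flow (flow (flow q a b e1) (- s * b) (s * a) \<tau>) (- a) (- b) \<tau>)
             (s * b) (- s * a) \<tau>) a b \<tau>) (- s * b) (s * a) e2"
  let ?R = "flow (flow (flow (flow q (s * b) (- s * a) (R - e2)) a b R) (- s * b) (s * a) R) (- a) (- b) (R - e1)"
  have "fst ?L = fst ?R" "fst (snd ?L) = fst (snd ?R)"
    unfolding q flow_def by (simp_all add: algebra_simps)
  moreover have "snd (snd ?L) - snd (snd ?R) = s * (a * a + b * b) * (\<tau> * \<tau> + e1 * e2 - R * R)"
    unfolding q flow_def by (simp add: field_simps)
  with assms have "snd (snd ?L) = snd (snd ?R)"
    by simp
  ultimately show ?thesis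
    by (simp add: prod_eq_iff)
qed

lemma shortcut_not_time_minimizer:
  assumes adm: "admissible T \<gamma> u1 u2" and "0 \<le> t0"
    and "0 < e1" "e1 \<le> \<tau>" "0 < e2" "e2 \<le> \<tau>" and T: "T = t0 + e1 + 4 * \<tau> + e2"
    and "\<bar>s\<bar> \<le> 1" "\<bar>a\<bar> \<le> 1" "\<bar>b\<bar> \<le> 1"
    and \<gamma>T: "\<gamma> T = flow (flow (flow (flow (flow (flow (\<gamma> t0) a b e1) (- s * b) (s * a) \<tau>) (- a) (- b) \<tau>)
                   (s * b) (- s * a) \<tau>) a b \<tau>) (- s * b) (s * a) e2"
  shows "\<not> time_minimizer T \<gamma>"
proof -
  define R where "R = sqrt (\<tau> * \<tau> + e1 * e2)"
  have RR: "R * R = \<tau> * \<tau> + e1 * e2"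
    using assms(3-6) by (simp add: R_def)
  have "\<tau> < R"
    using assms(3-6) real_sqrt_less_mono[of "\<tau> * \<tau>" "\<tau> * \<tau> + e1 * e2"] by (simp add: R_def)
  have "\<tau> * \<tau> + e1 * e2 < (\<tau> + (e1 + e2) / 2) * (\<tau> + (e1 + e2) / 2)"
  proof -
    have "0 < \<tau> * (e1 + e2)" "0 \<le> (e1 - e2) * (e1 - e2)"
      using assms(3-6) by simp_all
    then show ?thesis
      by (simp add: field_simps)
  qed
  then have "R < \<tau> + (e1 + e2) / 2"
    using assms(3-6) real_sqrt_less_mono by (fastforce simp: R_def)
  have signs: "\<bar>s * b\<bar> \<le> 1" "\<bar>- s * a\<bar> \<le> 1" "\<bar>- s * b\<bar> \<le> 1" "\<bar>s * a\<bar> \<le> 1" "\<bar>- a\<bar> \<le> 1" "\<bar>- b\<bar> \<le> 1"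
    using assms(8-10) by (auto simp: abs_mult intro: mult_le_one)
  define T1 where "T1 = t0 + (R - e2)"
  define T2 where "T2 = T1 + R"
  define T3 where "T3 = T2 + R"
  define T4 where "T4 = T3 + (R - e1)"
  define \<psi>1 where "\<psi>1 = extend_by_flow \<gamma> t0 (s * b) (- s * a)"
  define \<psi>2 where "\<psi>2 = extend_by_flow \<psi>1 T1 a b"
  define \<psi>3 where "\<psi>3 = extend_by_flow \<psi>2 T2 (- s * b) (s * a)"
  define \<psi>4 where "\<psi>4 = extend_by_flow \<psi>3 T3 (- a) (- b)"
  have lengths: "0 \<le> R - e2" "0 \<le> R" "0 \<le> R - e1"
    using \<open>\<tau> < R\<close> assms(3-6) by auto
  have "admissible t0 \<gamma> u1 u2"
    using adm \<open>0 \<le> t0\<close> by (rule admissible_restrict) (use T assms(3-6) in auto)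
  then have "\<exists>v1 v2. admissible T1 \<psi>1 v1 v2"
    unfolding T1_def \<psi>1_def using admissible_extend_by_flow signs lengths by blast
  then have "\<exists>v1 v2. admissible T2 \<psi>2 v1 v2"
    unfolding T2_def \<psi>2_def using admissible_extend_by_flow assms(9,10) lengths by blast
  then have "\<exists>v1 v2. admissible T3 \<psi>3 v1 v2"
    unfolding T3_def \<psi>3_def using admissible_extend_by_flow signs lengths by blast
  then obtain v1 v2 where "admissible T4 \<psi>4 v1 v2"
    unfolding T4_def \<psi>4_def using admissible_extend_by_flow signs lengths by blast
  moreover have "\<psi>4 0 = \<gamma> 0"
    using \<open>0 \<le> t0\<close> lengths by (simp add: T1_def T2_def T3_def \<psi>1_def \<psi>2_def \<psi>3_def \<psi>4_def extend_by_flow_start)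
  moreover have "\<psi>4 T4 = \<gamma> T"
  proof -
    have "\<psi>1 T1 = flow (\<gamma> t0) (s * b) (- s * a) (R - e2)" "\<psi>2 T2 = flow (\<psi>1 T1) a b R"
      "\<psi>3 T3 = flow (\<psi>2 T2) (- s * b) (s * a) R" "\<psi>4 T4 = flow (\<psi>3 T3) (- a) (- b) (R - e1)"
      unfolding T1_def T2_def T3_def T4_def \<psi>1_def \<psi>2_def \<psi>3_def \<psi>4_def
      using lengths by (simp_all only: extend_by_flow_end)
    then show ?thesis
      using flow_six_arcs_eq_four_arcs[OF RR, of "\<gamma> t0" a b s] \<gamma>T by simp
  qed
  moreover have "T4 < T"
    using \<open>R < \<tau> + (e1 + e2) / 2\<close> by (simp add: T T1_def T2_def T3_def T4_def field_simps)
  ultimately show ?thesis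
    unfolding time_minimizer_def by blast
qed

lemma bounded_linear_proj12: "bounded_linear (\<lambda>v::R3. (fst v, fst (snd v)))"
  by (intro bounded_linear_Pair bounded_linear_fst bounded_linear_compose[OF bounded_linear_fst bounded_linear_snd])

lemma constant_control_trajectory_eq_flow:
  assumes \<gamma>: "abs_cont_on l r \<gamma>" and N: "negligible N"
    and \<gamma>': "\<And>t. t \<in> {l<..<r} - N \<Longrightarrow> (\<gamma> has_vector_derivative d1 *\<^sub>R X1 (\<gamma> t) + d2 *\<^sub>R X2 (\<gamma> t)) (at t)"
    and "t \<in> {l..r}"
  shows "\<gamma> t = flow (\<gamma> l) d1 d2 (t - l)"
proof -
  have planar: "fst (\<gamma> s) = fst (\<gamma> l) + d1 * (s - l) \<and> fst (snd (\<gamma> s)) = fst (snd (\<gamma> l)) + d2 * (s - l)"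
    if s: "s \<in> {l..r}" for s
  proof -
    define G where "G s = (fst (\<gamma> s), fst (snd (\<gamma> s))) - s *\<^sub>R (d1, d2)" for s
    have lin: "abs_cont_on l s (\<lambda>s. s *\<^sub>R (d1, d2))"
    proof (rule abs_cont_on_lipschitz[where K = "norm (d1, d2)"])
      fix s' t' :: real
      have "norm (t' *\<^sub>R (d1, d2) - s' *\<^sub>R (d1, d2)) = \<bar>t' - s'\<bar> * norm (d1, d2)"
        by (simp only: scaleR_diff_left[symmetric] norm_scaleR)
      then show "norm (t' *\<^sub>R (d1, d2) - s' *\<^sub>R (d1, d2)) \<le> norm (d1, d2) * \<bar>t' - s'\<bar>"
        by simp
    qed simp
    have "abs_cont_on l s \<gamma>"
      using abs_cont_on_subinterval[OF \<gamma>, of l s] s by simp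
    then have acG: "abs_cont_on l s G"
      unfolding G_def by (rule abs_cont_on_diff[OF abs_cont_on_bounded_linear[OF _ bounded_linear_proj12] lin])
    have G': "(G has_vector_derivative 0) (at t)" if "t \<in> {l..s} - (N \<union> {l, s})" for t
    proof -
      have "((\<lambda>s. (fst (\<gamma> s), fst (snd (\<gamma> s)))) has_vector_derivative (d1, d2)) (at t)"
        using bounded_linear.has_vector_derivative[OF bounded_linear_proj12 \<gamma>'[of t]] that s
        by (simp add: X1_X2_combination)
      moreover have "((\<lambda>s. s *\<^sub>R (d1, d2)) has_vector_derivative 1 *\<^sub>R (d1, d2)) (at t)"
        by (rule bounded_linear.has_vector_derivative[OF bounded_linear_scaleR_left has_vector_derivative_id])
      ultimately have "(G has_vector_derivative (d1, d2) - 1 *\<^sub>R (d1, d2)) (at t)"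
        unfolding G_def by (rule has_vector_derivative_diff)
      then show ?thesis by simp
    qed
    have "negligible (N \<union> {l, s})"
      using N by simp
    from abs_cont_on_derivative_zero_imp_eq[OF acG _ this G'] s have "G s = G l"
      by simp
    then show ?thesis
      unfolding G_def by (simp add: algebra_simps)
  qed
  define H where "H s = \<gamma> s - flow (\<gamma> l) d1 d2 (s - l)" for s
  have "abs_cont_on l t \<gamma>"
    using abs_cont_on_subinterval[OF \<gamma>, of l t] \<open>t \<in> {l..r}\<close> by simp
  then have acH: "abs_cont_on l t H"
    unfolding H_def by (rule abs_cont_on_diff[OF _ abs_cont_on_flow])
  have H': "(H has_vector_derivative 0) (at s)" if "s \<in> {l..t} - (N \<union> {l, t})" for s
  proof -
    have "s \<in> {l<..<r} - N" "s \<in> {l..r}"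
      using that \<open>t \<in> {l..r}\<close> by auto
    moreover from this(1) have "(H has_vector_derivative (d1 *\<^sub>R X1 (\<gamma> s) + d2 *\<^sub>R X2 (\<gamma> s)) -
        (d1 *\<^sub>R X1 (flow (\<gamma> l) d1 d2 (s - l)) + d2 *\<^sub>R X2 (flow (\<gamma> l) d1 d2 (s - l)))) (at s)"
      unfolding H_def by (rule has_vector_derivative_diff[OF \<gamma>' flow_has_vector_derivative])
    ultimately show ?thesis
      using planar[OF \<open>s \<in> {l..r}\<close>] by (simp add: X1_X2_combination flow_def)
  qed
  have "negligible (N \<union> {l, t})"
    using N by simp
  from abs_cont_on_derivative_zero_imp_eq[OF acH _ this H'] \<open>t \<in> {l..r}\<close> have "H t = H l"
    by simp
  then show ?thesis
    unfolding H_def by simp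
qed

lemma sgn_constant_between_zeros:
  fixes f :: "real \<Rightarrow> real"
  assumes f: "continuous_on {l..r} f" and nz: "\<forall>t\<in>{l<..<r}. f t \<noteq> 0"
    and "s \<in> {l<..<r}" "t \<in> {l<..<r}"
  shows "sgn (f s) = sgn (f t)"
proof -
  have "sgn (f x) = sgn (f y)" if "x \<le> y" "x \<in> {l<..<r}" "y \<in> {l<..<r}" for x y
  proof (rule ccontr)
    assume "sgn (f x) \<noteq> sgn (f y)"
    moreover have "f x \<noteq> 0" "f y \<noteq> 0"
      using nz that by auto
    ultimately have "f x < 0 \<and> 0 < f y \<or> f y < 0 \<and> 0 < f x"
      by (auto simp: sgn_if split: if_splits)
    moreover have "continuous_on {x..y} f"
      using f that by (rule_tac continuous_on_subset) auto
    ultimately obtain z where "x \<le> z" "z \<le> y" "f z = 0"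
      using IVT'[of f x 0 y] IVT2'[of f y 0 x] \<open>x \<le> y\<close> by force
    with nz that show False
      by auto
  qed
  with assms(3,4) show ?thesis
    by (metis linear)
qed

text \<open>What the maximum principle yields along an extremal of the Heisenberg sub-\<open>\<ell>\<^sup>\<infinity>\<close> structure:
  off a negligible set the control is the sign vector of the switching functions, these are affine
  in the position with a common slope \<open>c\<close>, and \<open>\<bar>P1\<bar> + \<bar>P2\<bar>\<close> is a positive constant.\<close>
locale affine_switching =
  fixes T :: real and \<gamma> :: "real \<Rightarrow> R3" and u1 u2 :: "real \<Rightarrow> real" and N :: "real set"
    and P1 P2 :: "real \<Rightarrow> real" and A0 B0 c l0 :: real
  assumes admissible: "admissible T \<gamma> u1 u2"
    and negligible: "negligible N"
    and trajectory: "\<And>t. t \<in> {0..T} - N \<Longrightarrow>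
      (\<gamma> has_vector_derivative u1 t *\<^sub>R X1 (\<gamma> t) + u2 t *\<^sub>R X2 (\<gamma> t)) (at t)"
    and control1: "\<And>t. t \<in> {0..T} - N \<Longrightarrow> P1 t \<noteq> 0 \<Longrightarrow> P2 t \<noteq> 0 \<Longrightarrow> u1 t = sgn (P1 t)"
    and control2: "\<And>t. t \<in> {0..T} - N \<Longrightarrow> P1 t \<noteq> 0 \<Longrightarrow> P2 t \<noteq> 0 \<Longrightarrow> u2 t = sgn (P2 t)"
    and P1_eq: "\<And>t. t \<in> {0..T} \<Longrightarrow> P1 t = A0 - c * fst (snd (\<gamma> t))"
    and P2_eq: "\<And>t. t \<in> {0..T} \<Longrightarrow> P2 t = B0 + c * fst (\<gamma> t)"
    and abs_P1_P2: "\<And>t. t \<in> {0..T} \<Longrightarrow> \<bar>P1 t\<bar> + \<bar>P2 t\<bar> = l0"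
    and l0_pos: "l0 > 0"
begin

lemma abs_cont_trajectory: "abs_cont_on 0 T \<gamma>"
  using admissible by (simp add: admissible_def)

lemma continuous_on_P1: "continuous_on {0..T} P1"
proof -
  have "continuous_on {0..T} (\<lambda>t. A0 - c * fst (snd (\<gamma> t)))"
    using abs_cont_on_imp_continuous_on[OF abs_cont_trajectory] by (intro continuous_intros)
  then show ?thesis
    by (rule continuous_on_eq) (simp add: P1_eq)
qed

lemma continuous_on_P2: "continuous_on {0..T} P2"
proof -
  have "continuous_on {0..T} (\<lambda>t. B0 + c * fst (\<gamma> t))"
    using abs_cont_on_imp_continuous_on[OF abs_cont_trajectory] by (intro continuous_intros)
  then show ?thesis
    by (rule continuous_on_eq) (simp add: P2_eq)
qed

definition bang_arc :: "real \<Rightarrow> real \<Rightarrow> real \<Rightarrow> real \<Rightarrow> bool" where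
  "bang_arc l r d1 d2 \<longleftrightarrow> 0 \<le> l \<and> l < r \<and> r \<le> T \<and> \<bar>d1\<bar> = 1 \<and> \<bar>d2\<bar> = 1 \<and>
     (\<forall>t\<in>{l<..<r}. sgn (P1 t) = d1 \<and> sgn (P2 t) = d2) \<and>
     (\<forall>t\<in>{l..r}. \<gamma> t = flow (\<gamma> l) d1 d2 (t - l))"

lemma bang_arc_exists:
  assumes "0 \<le> l" "l < r" "r \<le> T" and nz: "\<forall>t\<in>{l<..<r}. P1 t \<noteq> 0 \<and> P2 t \<noteq> 0"
  obtains d1 d2 where "bang_arc l r d1 d2"
proof -
  define m where "m = (l + r) / 2"
  have m: "m \<in> {l<..<r}"
    using assms(2) by (simp add: m_def)
  have cont: "continuous_on {l..r} P1" "continuous_on {l..r} P2"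
    using continuous_on_P1 continuous_on_P2 assms(1,3) by (auto elim!: continuous_on_subset)
  have sgn: "sgn (P1 t) = sgn (P1 m) \<and> sgn (P2 t) = sgn (P2 m)" if "t \<in> {l<..<r}" for t
    using sgn_constant_between_zeros[OF cont(1) _ that m] sgn_constant_between_zeros[OF cont(2) _ that m] nz
    by blast
  have "\<gamma> t = flow (\<gamma> l) (sgn (P1 m)) (sgn (P2 m)) (t - l)" if "t \<in> {l..r}" for t
  proof (rule constant_control_trajectory_eq_flow[OF _ negligible _ that])
    show "abs_cont_on l r \<gamma>"
      using abs_cont_on_subinterval[OF abs_cont_trajectory] assms(1,3) .
    fix s assume s: "s \<in> {l<..<r} - N"
    then have "s \<in> {0..T} - N"
      using assms(1,3) by auto
    with s nz sgn control1 control2 trajectory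
    show "(\<gamma> has_vector_derivative sgn (P1 m) *\<^sub>R X1 (\<gamma> s) + sgn (P2 m) *\<^sub>R X2 (\<gamma> s)) (at s)"
      by force
  qed
  moreover have "\<bar>sgn (P1 m)\<bar> = 1" "\<bar>sgn (P2 m)\<bar> = 1"
    using nz m by (simp_all add: abs_sgn_eq)
  ultimately show ?thesis
    using that assms(1-3) sgn unfolding bang_arc_def by blast
qed

end

context affine_switching
begin

lemma bang_arcD:
  assumes "bang_arc l r d1 d2"
  shows "0 \<le> l" "l < r" "r \<le> T" "\<bar>d1\<bar> = 1" "\<bar>d2\<bar> = 1"
    and bang_arc_sgn: "t \<in> {l<..<r} \<Longrightarrow> sgn (P1 t) = d1" "t \<in> {l<..<r} \<Longrightarrow> sgn (P2 t) = d2"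
    and bang_arc_flow: "t \<in> {l..r} \<Longrightarrow> \<gamma> t = flow (\<gamma> l) d1 d2 (t - l)"
  using assms unfolding bang_arc_def by (meson greaterThanLessThan_iff)+

lemma bang_arc_switching_functions:
  assumes "bang_arc l r d1 d2" "t \<in> {l..r}"
  shows "P1 t = P1 l - c * d2 * (t - l)" "P2 t = P2 l + c * d1 * (t - l)"
proof -
  have "t \<in> {0..T}" "l \<in> {0..T}"
    using assms(2) bang_arcD(1,3)[OF assms(1)] by auto
  with bang_arc_flow[OF assms] show "P1 t = P1 l - c * d2 * (t - l)" "P2 t = P2 l + c * d1 * (t - l)"
    by (simp_all add: P1_eq P2_eq flow_def algebra_simps)
qed

lemma bang_arc_nonzero:
  assumes "bang_arc l r d1 d2" "t \<in> {l<..<r}"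
  shows "P1 t \<noteq> 0" "P2 t \<noteq> 0"
  using bang_arc_sgn[OF assms] bang_arcD(4,5)[OF assms(1)] by auto

lemma bang_arc_end:
  assumes "bang_arc l r d1 d2"
  shows "\<gamma> r = flow (\<gamma> l) d1 d2 (r - l)"
  using bang_arc_flow[OF assms, of r] bang_arcD(2)[OF assms] by simp

lemma sgn_unit: "\<bar>d\<bar> = 1 \<Longrightarrow> sgn d = (d::real)"
  by (auto simp: abs_if sgn_if split: if_splits)

lemma bang_arc_zero_at_end:
  assumes "bang_arc l m d1 d2"
  shows "P1 m = 0 \<Longrightarrow> d1 = sgn c * d2" "P2 m = 0 \<Longrightarrow> d2 = - sgn c * d1"
proof -
  define t where "t = (l + m) / 2"
  have t: "t \<in> {l<..<m}" "t \<in> {l..m}" "m \<in> {l..m}" "sgn (m - t) = 1"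
    using bang_arcD(2)[OF assms] unfolding t_def by auto
  have d: "sgn (P1 t) = d1" "sgn (P2 t) = d2" "sgn d1 = d1" "sgn d2 = d2"
    using bang_arc_sgn[OF assms t(1)] bang_arcD(4,5)[OF assms] sgn_unit by auto
  note P = bang_arc_switching_functions[OF assms t(2)] bang_arc_switching_functions[OF assms t(3)]
  show "d1 = sgn c * d2" if "P1 m = 0"
  proof -
    have "P1 t = c * d2 * (m - t)"
      using P(1,3) that by (simp add: algebra_simps)
    then show ?thesis
      using d t(4) by (simp add: sgn_mult)
  qed
  show "d2 = - sgn c * d1" if "P2 m = 0"
  proof -
    have "P2 t = - c * d1 * (m - t)"
      using P(2,4) that by (simp add: algebra_simps)
    then show ?thesis
      using d t(4) by (simp add: sgn_mult)
  qed
qed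

lemma bang_arc_zero_at_start:
  assumes "bang_arc m r e1 e2"
  shows "P1 m = 0 \<Longrightarrow> e1 = - sgn c * e2" "P2 m = 0 \<Longrightarrow> e2 = sgn c * e1"
proof -
  define t where "t = (m + r) / 2"
  have t: "t \<in> {m<..<r}" "t \<in> {m..r}" "sgn (t - m) = 1"
    using bang_arcD(2)[OF assms] unfolding t_def by auto
  have e: "sgn (P1 t) = e1" "sgn (P2 t) = e2" "sgn e1 = e1" "sgn e2 = e2"
    using bang_arc_sgn[OF assms t(1)] bang_arcD(4,5)[OF assms] sgn_unit by auto
  note P = bang_arc_switching_functions[OF assms t(2)]
  show "e1 = - sgn c * e2" if "P1 m = 0"
  proof -
    have "P1 t = - c * e2 * (t - m)"
      using P(1) that by simp
    then show ?thesis
      using e t(3) by (simp add: sgn_mult)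
  qed
  show "e2 = sgn c * e1" if "P2 m = 0"
  proof -
    have "P2 t = c * e1 * (t - m)"
      using P(2) that by simp
    then show ?thesis
      using e t(3) by (simp add: sgn_mult)
  qed
qed

lemma bang_arcs_sgn_continue:
  assumes d: "bang_arc l m d1 d2" and e: "bang_arc m r e1 e2"
  shows "P1 m \<noteq> 0 \<Longrightarrow> e1 = d1" "P2 m \<noteq> 0 \<Longrightarrow> e2 = d2"
proof -
  define s t where "s = (l + m) / 2" and "t = (m + r) / 2"
  have st: "s \<in> {l<..<m}" "t \<in> {m<..<r}"
    using bang_arcD(2)[OF d] bang_arcD(2)[OF e] unfolding s_def t_def by auto
  have lr: "0 \<le> l" "r \<le> T"
    using bang_arcD(1)[OF d] bang_arcD(3)[OF e] .
  have st': "s \<in> {l<..<r}" "t \<in> {l<..<r}"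
    using st by auto
  have split: "x \<in> {l<..<m} \<or> x = m \<or> x \<in> {m<..<r}" if "x \<in> {l<..<r}" for x
    using that by auto
  show "e1 = d1" if "P1 m \<noteq> 0"
  proof -
    have "\<forall>x\<in>{l<..<r}. P1 x \<noteq> 0"
      using split that bang_arc_nonzero(1)[OF d] bang_arc_nonzero(1)[OF e] by blast
    then have "sgn (P1 t) = sgn (P1 s)"
      using continuous_on_subset[OF continuous_on_P1, of "{l..r}"] lr st'
      by (intro sgn_constant_between_zeros) auto
    then show ?thesis
      using bang_arc_sgn(1)[OF d st(1)] bang_arc_sgn(1)[OF e st(2)] by simp
  qed
  show "e2 = d2" if "P2 m \<noteq> 0"
  proof -
    have "\<forall>x\<in>{l<..<r}. P2 x \<noteq> 0"
      using split that bang_arc_nonzero(2)[OF d] bang_arc_nonzero(2)[OF e] by blast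
    then have "sgn (P2 t) = sgn (P2 s)"
      using continuous_on_subset[OF continuous_on_P2, of "{l..r}"] lr st'
      by (intro sgn_constant_between_zeros) auto
    then show ?thesis
      using bang_arc_sgn(2)[OF d st(1)] bang_arc_sgn(2)[OF e st(2)] by simp
  qed
qed

lemma bang_arc_switch:
  assumes d: "bang_arc l m d1 d2" and e: "bang_arc m r e1 e2" and "P1 m = 0 \<or> P2 m = 0"
  shows "c \<noteq> 0" "e1 = - sgn c * d2" "e2 = sgn c * d1"
proof -
  have "\<bar>P1 m\<bar> + \<bar>P2 m\<bar> = l0"
    using bang_arcD(1,2)[OF d] bang_arcD(2,3)[OF e] abs_P1_P2 by simp
  with l0_pos assms(3) have "P1 m = 0 \<and> P2 m \<noteq> 0 \<or> P2 m = 0 \<and> P1 m \<noteq> 0"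
    by auto
  then have "c \<noteq> 0 \<and> e1 = - sgn c * d2 \<and> e2 = sgn c * d1"
  proof (elim disjE conjE)
    assume "P1 m = 0" "P2 m \<noteq> 0"
    then have e2: "e2 = d2" and d1: "d1 = sgn c * d2" and e1: "e1 = - sgn c * e2"
      using bang_arcs_sgn_continue(2)[OF d e] bang_arc_zero_at_end(1)[OF d] bang_arc_zero_at_start(1)[OF e]
      by simp_all
    have "\<bar>sgn c\<bar> = 1"
      using d1 bang_arcD(4,5)[OF d] by (simp add: abs_mult)
    then show ?thesis
      using d1 e1 e2 by (auto simp: sgn_if split: if_splits)
  next
    assume "P2 m = 0" "P1 m \<noteq> 0"
    then have e1: "e1 = d1" and d2: "d2 = - sgn c * d1" and e2: "e2 = sgn c * e1"
      using bang_arcs_sgn_continue(1)[OF d e] bang_arc_zero_at_end(2)[OF d] bang_arc_zero_at_start(2)[OF e]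
      by simp_all
    have "\<bar>sgn c\<bar> = 1"
      using d2 bang_arcD(4,5)[OF d] by (simp add: abs_mult)
    then show ?thesis
      using d2 e1 e2 by (auto simp: sgn_if split: if_splits)
  qed
  then show "c \<noteq> 0" "e1 = - sgn c * d2" "e2 = sgn c * d1"
    by simp_all
qed

lemma bang_arc_increments:
  assumes "bang_arc l m d1 d2"
  shows "\<bar>P1 m - P1 l\<bar> = \<bar>c\<bar> * (m - l)" "\<bar>P2 m - P2 l\<bar> = \<bar>c\<bar> * (m - l)"
  using bang_arc_switching_functions[OF assms, of m] bang_arcD(2,4,5)[OF assms]
  by (simp_all add: abs_mult)

lemma bang_arc_abs_P1_P2:
  assumes "bang_arc l m d1 d2"
  shows "\<bar>P1 l\<bar> + \<bar>P2 l\<bar> = l0" "\<bar>P1 m\<bar> + \<bar>P2 m\<bar> = l0"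
  using bang_arcD(1-3)[OF assms] abs_P1_P2 by simp_all

lemma bang_arc_length_le:
  assumes "bang_arc l m d1 d2" "P1 l = 0 \<or> P2 l = 0 \<or> P1 m = 0 \<or> P2 m = 0"
  shows "\<bar>c\<bar> * (m - l) \<le> l0"
  using assms(2) bang_arc_increments[OF assms(1)] bang_arc_abs_P1_P2[OF assms(1)]
  by (elim disjE) auto

lemma bang_arc_length_between_switches:
  assumes arc: "bang_arc l m d1 d2" and "P1 l = 0 \<or> P2 l = 0" "P1 m = 0 \<or> P2 m = 0"
  shows "\<bar>c\<bar> * (m - l) = l0"
proof -
  define t where "t = (l + m) / 2"
  have t: "t \<in> {l<..<m}" "t \<in> {l..m}" "l < m"
    using bang_arcD(2)[OF arc] unfolding t_def by auto
  have "c \<noteq> 0"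
  proof
    assume "c = 0"
    then have "P1 t = P1 l" "P2 t = P2 l"
      using bang_arc_switching_functions[OF arc t(2)] by simp_all
    with assms(2) bang_arc_nonzero[OF arc t(1)] show False
      by auto
  qed
  with t(3) have "0 < \<bar>c\<bar> * (m - l)"
    by simp
  with assms(2,3) bang_arc_increments[OF arc] bang_arc_abs_P1_P2[OF arc] show ?thesis
    by auto
qed

end

lemma sorted_wrt_less_nth_less_imp_index_less:
  fixes L :: "'a::linorder list"
  assumes "sorted_wrt (<) L" "i < length L" "j < length L" "L ! i < L ! j"
  shows "i < j"
proof (rule ccontr)
  assume "\<not> i < j"
  then have "j < i \<or> j = i"
    by auto
  then have "L ! j \<le> L ! i"
    using sorted_wrt_nth_less[OF assms(1), of j i] assms(2) by auto
  with assms(4) show False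
    by simp
qed

lemma finite_set_last_five:
  fixes Z :: "real set"
  assumes "finite Z" "5 \<le> card Z" "Z \<subseteq> {0<..<T}"
  obtains t0 z1 z2 z3 z4 z5 where "0 \<le> t0" "t0 < z1" "z1 < z2" "z2 < z3" "z3 < z4" "z4 < z5" "z5 < T"
    "{z1, z2, z3, z4, z5} \<subseteq> Z"
    "\<And>t. t \<in> {t0<..<z1} \<union> {z1<..<z2} \<union> {z2<..<z3} \<union> {z3<..<z4} \<union> {z4<..<z5} \<union> {z5<..<T} \<Longrightarrow> t \<notin> Z"
proof -
  define L where "L = sorted_list_of_set Z"
  define n where "n = length L"
  have sorted: "sorted_wrt (<) L" and set: "set L = Z" and "5 \<le> n"
    using assms(1,2) by (simp_all add: L_def n_def strict_sorted_list_of_set)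
  have nth: "L ! i \<in> Z" if "i < n" for i
    using set that unfolding n_def by auto
  have less: "L ! i < L ! j" if "i < j" "j < n" for i j
    using sorted_wrt_nth_less[OF sorted] that unfolding n_def by blast
  have index: "i < j" if "j < n" "L ! i < L ! j" "i < n" for i j
    using sorted_wrt_less_nth_less_imp_index_less[OF sorted] that unfolding n_def by blast
  have member: "\<exists>j<n. t = L ! j" if "t \<in> Z" for t
    using that set unfolding n_def by (metis in_set_conv_nth)
  have gap: "t \<notin> Z" if "Suc i < n" "L ! i < t" "t < L ! Suc i" for i t
  proof
    assume "t \<in> Z"
    then obtain j where "j < n" "t = L ! j"
      using member by blast
    moreover have "i < n"
      using that(1) by simp
    ultimately have "i < j" "j < Suc i"
      using that by (auto intro: index)
    then show False
      by simp
  qed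
  have below: "t \<notin> Z" if "t < L ! 0" for t
  proof
    assume "t \<in> Z"
    then obtain j where "j < n" "t = L ! j"
      using member by blast
    have "j < 0"
      by (rule index) (use that \<open>5 \<le> n\<close> \<open>j < n\<close> \<open>t = L ! j\<close> in auto)
    then show False
      by simp
  qed
  have above: "t \<notin> Z" if "L ! (n - 1) < t" for t
  proof
    assume "t \<in> Z"
    then obtain j where "j < n" "t = L ! j"
      using member by blast
    with that \<open>5 \<le> n\<close> have "n - 1 < j"
      by (auto intro: index)
    with \<open>j < n\<close> show False
      by simp
  qed
  define t0 where "t0 = (if 6 \<le> n then L ! (n - 6) else 0)"
  have "0 \<le> t0 \<and> t0 < L ! (n - 5) \<and> (\<forall>t \<in> {t0<..<L ! (n - 5)}. t \<notin> Z)"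
  proof (cases "6 \<le> n")
    case True
    then have "Suc (n - 6) = n - 5" "n - 5 < n"
      by simp_all
    with True show ?thesis
      using nth[of "n - 6"] less[of "n - 6" "n - 5"] gap[of "n - 6"] assms(3) by (auto simp: t0_def)
  next
    case False
    with \<open>5 \<le> n\<close> have "n = 5" by simp
    then show ?thesis
      using nth[of 0] below assms(3) by (auto simp: t0_def)
  qed
  moreover have idx: "Suc (n - 5) = n - 4" "Suc (n - 4) = n - 3" "Suc (n - 3) = n - 2" "Suc (n - 2) = n - 1"
    "n - 1 < n"
    using \<open>5 \<le> n\<close> by simp_all
  moreover have "L ! (n - 1) < T"
    using nth[of "n - 1"] idx(5) assms(3) by auto
  moreover have "{L ! (n - 5), L ! (n - 4), L ! (n - 3), L ! (n - 2), L ! (n - 1)} \<subseteq> Z"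
    using nth \<open>5 \<le> n\<close> by simp
  moreover have "t \<notin> Z" if "t \<in> {L ! (n - 5)<..<L ! (n - 4)} \<union> {L ! (n - 4)<..<L ! (n - 3)}
      \<union> {L ! (n - 3)<..<L ! (n - 2)} \<union> {L ! (n - 2)<..<L ! (n - 1)} \<union> {L ! (n - 1)<..<T}" for t
    using that gap[of "n - 5" t] gap[of "n - 4" t] gap[of "n - 3" t] gap[of "n - 2" t] above[of t] idx
    by auto
  ultimately show ?thesis
    using less[of "n - 5" "n - 4"] less[of "n - 4" "n - 3"] less[of "n - 3" "n - 2"] less[of "n - 2" "n - 1"]
      \<open>5 \<le> n\<close> by (intro that[of t0 "L ! (n - 5)" "L ! (n - 4)" "L ! (n - 3)" "L ! (n - 2)" "L ! (n - 1)"]) auto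
qed

context affine_switching
begin

lemma five_switches_not_time_minimizer:
  assumes "0 \<le> t0" "t0 < z1" "z1 < z2" "z2 < z3" "z3 < z4" "z4 < z5" "z5 < T"
    and switch: "\<And>z. z \<in> {z1, z2, z3, z4, z5} \<Longrightarrow> P1 z = 0 \<or> P2 z = 0"
    and regular: "\<And>t. t \<in> {t0<..<z1} \<union> {z1<..<z2} \<union> {z2<..<z3} \<union> {z3<..<z4} \<union> {z4<..<z5} \<union> {z5<..<T} \<Longrightarrow>
      P1 t \<noteq> 0 \<and> P2 t \<noteq> 0"
  shows "\<not> time_minimizer T \<gamma>"
proof -
  obtain a b where A0: "bang_arc t0 z1 a b"
    using assms(1-7) regular by (rule_tac bang_arc_exists[of t0 z1]) auto
  obtain p1 q1 where A1: "bang_arc z1 z2 p1 q1"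
    using assms(1-7) regular by (rule_tac bang_arc_exists[of z1 z2]) auto
  obtain p2 q2 where A2: "bang_arc z2 z3 p2 q2"
    using assms(1-7) regular by (rule_tac bang_arc_exists[of z2 z3]) auto
  obtain p3 q3 where A3: "bang_arc z3 z4 p3 q3"
    using assms(1-7) regular by (rule_tac bang_arc_exists[of z3 z4]) auto
  obtain p4 q4 where A4: "bang_arc z4 z5 p4 q4"
    using assms(1-7) regular by (rule_tac bang_arc_exists[of z4 z5]) auto
  obtain p5 q5 where A5: "bang_arc z5 T p5 q5"
    using assms(1-7) regular by (rule_tac bang_arc_exists[of z5 T]) auto
  define s where "s = sgn c"
  have "c \<noteq> 0"
    using bang_arc_switch(1)[OF A0 A1] switch by simp
  then have ss: "s * (s * x) = x" for x
    by (simp add: s_def sgn_if)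
  have "p1 = - s * b" "q1 = s * a"
    using bang_arc_switch(2,3)[OF A0 A1] switch unfolding s_def by simp_all
  moreover have "p2 = - s * q1" "q2 = s * p1"
    using bang_arc_switch(2,3)[OF A1 A2] switch unfolding s_def by simp_all
  moreover have "p3 = - s * q2" "q3 = s * p2"
    using bang_arc_switch(2,3)[OF A2 A3] switch unfolding s_def by simp_all
  moreover have "p4 = - s * q3" "q4 = s * p3"
    using bang_arc_switch(2,3)[OF A3 A4] switch unfolding s_def by simp_all
  moreover have "p5 = - s * q4" "q5 = s * p4"
    using bang_arc_switch(2,3)[OF A4 A5] switch unfolding s_def by simp_all
  ultimately have controls: "p1 = - s * b" "q1 = s * a" "p2 = - a" "q2 = - b" "p3 = s * b" "q3 = - s * a"
    "p4 = a" "q4 = b" "p5 = - s * b" "q5 = s * a"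
    by (simp_all add: ss)
  define \<tau> where "\<tau> = l0 / \<bar>c\<bar>"
  have len: "z2 - z1 = \<tau>" "z3 - z2 = \<tau>" "z4 - z3 = \<tau>" "z5 - z4 = \<tau>"
    using bang_arc_length_between_switches[OF A1] bang_arc_length_between_switches[OF A2]
      bang_arc_length_between_switches[OF A3] bang_arc_length_between_switches[OF A4]
      switch \<open>c \<noteq> 0\<close> unfolding \<tau>_def by (simp_all add: field_simps)
  have "\<bar>c\<bar> * (z1 - t0) \<le> l0" "\<bar>c\<bar> * (T - z5) \<le> l0"
    using bang_arc_length_le[OF A0] bang_arc_length_le[OF A5] switch[of z1] switch[of z5] by blast+
  then have ends: "z1 - t0 \<le> \<tau>" "T - z5 \<le> \<tau>"
    using \<open>c \<noteq> 0\<close> unfolding \<tau>_def by (simp_all add: field_simps)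
  have "\<gamma> T = flow (flow (flow (flow (flow (flow (\<gamma> t0) a b (z1 - t0)) (- s * b) (s * a) \<tau>)
      (- a) (- b) \<tau>) (s * b) (- s * a) \<tau>) a b \<tau>) (- s * b) (s * a) (T - z5)"
    using bang_arc_end[OF A0] bang_arc_end[OF A1] bang_arc_end[OF A2] bang_arc_end[OF A3]
      bang_arc_end[OF A4] bang_arc_end[OF A5] controls len by simp
  moreover have "\<bar>s\<bar> \<le> 1" "\<bar>a\<bar> \<le> 1" "\<bar>b\<bar> \<le> 1"
    using bang_arcD(4,5)[OF A0] by (simp_all add: s_def abs_sgn_eq)
  moreover have "T = t0 + (z1 - t0) + 4 * \<tau> + (T - z5)"
    using len by simp
  ultimately show ?thesis
    using assms(1-7) ends
    by (intro shortcut_not_time_minimizer[OF admissible \<open>0 \<le> t0\<close>, of "z1 - t0" \<tau> "T - z5"]) auto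
qed

lemma switching_times_not_time_minimizer:
  defines "Z \<equiv> {t \<in> {0<..<T}. P1 t = 0 \<or> P2 t = 0}"
  assumes "finite Z" "5 \<le> card Z"
  shows "\<not> time_minimizer T \<gamma>"
proof -
  obtain t0 z1 z2 z3 z4 z5 where z: "0 \<le> t0" "t0 < z1" "z1 < z2" "z2 < z3" "z3 < z4" "z4 < z5" "z5 < T"
    and "{z1, z2, z3, z4, z5} \<subseteq> Z"
    and gaps: "\<And>t. t \<in> {t0<..<z1} \<union> {z1<..<z2} \<union> {z2<..<z3} \<union> {z3<..<z4} \<union> {z4<..<z5} \<union> {z5<..<T} \<Longrightarrow> t \<notin> Z"
    using finite_set_last_five[OF assms(2,3), of T] unfolding Z_def by blast
  then have "P1 z = 0 \<or> P2 z = 0" if "z \<in> {z1, z2, z3, z4, z5}" for z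
    using that unfolding Z_def by blast
  moreover have "P1 t \<noteq> 0 \<and> P2 t \<noteq> 0"
    if "t \<in> {t0<..<z1} \<union> {z1<..<z2} \<union> {z2<..<z3} \<union> {z3<..<z4} \<union> {z4<..<z5} \<union> {z5<..<T}" for t
  proof -
    have "t \<in> {0<..<T}"
      using that z by auto
    with gaps[OF that] show ?thesis
      unfolding Z_def by blast
  qed
  ultimately show ?thesis
    by (rule five_switches_not_time_minimizer[OF z])
qed

end

lemma maximizing_control_eq_sgn:
  fixes v1 v2 p1 p2 :: real
  assumes "\<bar>v1\<bar> \<le> 1" "\<bar>v2\<bar> \<le> 1" "v1 * p1 + v2 * p2 = \<bar>p1\<bar> + \<bar>p2\<bar>" "p1 \<noteq> 0"
  shows "v1 = sgn p1"
proof -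
  have "v1 * p1 \<le> \<bar>p1\<bar>" "v2 * p2 \<le> \<bar>p2\<bar>"
    using mult_mono[OF assms(1) order_refl, of "\<bar>p1\<bar>"] mult_mono[OF assms(2) order_refl, of "\<bar>p2\<bar>"]
      abs_ge_self[of "v1 * p1"] abs_ge_self[of "v2 * p2"] by (simp_all add: abs_mult)
  with assms(3) have "v1 * p1 = \<bar>p1\<bar>"
    by linarith
  then have "(v1 - sgn p1) * p1 = 0"
    by (simp add: abs_sgn algebra_simps)
  with assms(4) show ?thesis
    by simp
qed

lemma continuous_on_eq_0_off_negligible:
  fixes h :: "real \<Rightarrow> real"
  assumes h: "continuous_on {a..b} h" and "a < b" and N: "negligible N"
    and zero: "\<And>t. t \<in> {a..b} - N \<Longrightarrow> h t = 0" and t: "t \<in> {a..b}"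
  shows "h t = 0"
proof (rule ccontr)
  assume "h t \<noteq> 0"
  with h t obtain d where "d > 0" and d: "\<And>s. s \<in> {a..b} \<Longrightarrow> dist s t < d \<Longrightarrow> dist (h s) (h t) < \<bar>h t\<bar>"
    unfolding continuous_on_iff by (metis zero_less_abs_iff)
  define p q where "p = max a (t - d / 2)" and "q = min b (t + d / 2)"
  have "p < q"
    using t \<open>a < b\<close> \<open>d > 0\<close> by (auto simp: p_def q_def)
  have "{p..q} \<subseteq> N"
  proof
    fix s assume s: "s \<in> {p..q}"
    then have "s \<in> {a..b}" "dist s t < d"
      using \<open>d > 0\<close> by (auto simp: p_def q_def dist_real_def)
    then have "h s \<noteq> 0"
      using d by (force simp: dist_real_def)
    with zero \<open>s \<in> {a..b}\<close> show "s \<in> N"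
      by blast
  qed
  then have "negligible {p..q}"
    using N negligible_subset by blast
  with \<open>p < q\<close> show False
    using negligible_interval(1)[of p q] by simp
qed

lemma ham_has_derivative:
  "((\<lambda>p. ham l p v1 v2) has_derivative
     (\<lambda>h. v2 * (snd (snd l) / 2) * fst h - v1 * (snd (snd l) / 2) * fst (snd h))) (at q)"
proof -
  have "(\<lambda>p. ham l p v1 v2) =
      (\<lambda>p. v1 * (fst l - snd (snd l) * fst (snd p) / 2) + v2 * (fst (snd l) + snd (snd l) * fst p / 2))"
    unfolding ham_def inner_X1 inner_X2 by simp
  then show ?thesis
    by (auto intro!: derivative_eq_intros simp: algebra_simps)
qed

lemma adjoint_equation:
  assumes "((\<lambda>p. ham l p v1 v2) has_derivative (\<lambda>h. - (l' \<bullet> h))) (at q)"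
  shows "l' = (- v2 * snd (snd l) / 2, v1 * snd (snd l) / 2, 0)"
proof -
  have "(\<lambda>h. - (l' \<bullet> h)) = (\<lambda>h. v2 * (snd (snd l) / 2) * fst h - v1 * (snd (snd l) / 2) * fst (snd h))"
    using has_derivative_unique[OF assms ham_has_derivative] .
  then have E: "- (l' \<bullet> h) = v2 * (snd (snd l) / 2) * fst h - v1 * (snd (snd l) / 2) * fst (snd h)" for h
    by metis
  obtain x y z where "l' = (x, y, z)"
    by (cases l')
  with E[of "(1, 0, 0)"] E[of "(0, 1, 0)"] E[of "(0, 0, 1)"] show ?thesis
    by simp
qed

lemma extremal_pairE:
  assumes "extremal_pair T \<gamma> u1 u2 lam"
  obtains N lam0 where "negligible N" "admissible T \<gamma> u1 u2" "abs_cont_on 0 T lam"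
    "\<And>t. t \<in> {0..T} - N \<Longrightarrow> \<bar>u1 t\<bar> \<le> 1 \<and> \<bar>u2 t\<bar> \<le> 1"
    "\<And>t. t \<in> {0..T} - N \<Longrightarrow> (\<gamma> has_vector_derivative u1 t *\<^sub>R X1 (\<gamma> t) + u2 t *\<^sub>R X2 (\<gamma> t)) (at t)"
    "\<And>t. t \<in> {0..T} - N \<Longrightarrow>
      (lam has_vector_derivative (- u2 t * snd (snd (lam t)) / 2, u1 t * snd (snd (lam t)) / 2, 0)) (at t)"
    "\<And>t. t \<in> {0..T} - N \<Longrightarrow> u1 t * phi1 \<gamma> lam t + u2 t * phi2 \<gamma> lam t = \<bar>phi1 \<gamma> lam t\<bar> + \<bar>phi2 \<gamma> lam t\<bar>"
    "\<And>t. t \<in> {0..T} - N \<Longrightarrow> \<bar>phi1 \<gamma> lam t\<bar> + \<bar>phi2 \<gamma> lam t\<bar> = lam0"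
proof -
  obtain lam0 where adm: "admissible T \<gamma> u1 u2" and "abs_cont_on 0 T lam"
    and ae: "AE t in lebesgue. t \<in> {0..T} \<longrightarrow>
          (\<exists>l'. (lam has_vector_derivative l') (at t) \<and>
               ((\<lambda>p. ham (lam t) p (u1 t) (u2 t)) has_derivative (\<lambda>h. - (l' \<bullet> h))) (at (\<gamma> t))) \<and>
          (\<gamma> has_vector_derivative (u1 t *\<^sub>R X1 (\<gamma> t) + u2 t *\<^sub>R X2 (\<gamma> t))) (at t) \<and>
          ((\<lambda>l. ham l (\<gamma> t) (u1 t) (u2 t)) has_derivative
              (\<lambda>h. h \<bullet> (u1 t *\<^sub>R X1 (\<gamma> t) + u2 t *\<^sub>R X2 (\<gamma> t)))) (at (lam t)) \<and>
          u1 t * phi1 \<gamma> lam t + u2 t * phi2 \<gamma> lam t = lam0 \<and>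
          \<bar>phi1 \<gamma> lam t\<bar> + \<bar>phi2 \<gamma> lam t\<bar> = lam0"
    using assms unfolding extremal_pair_def phi1_def phi2_def by blast
  moreover have bounds: "AE t in lebesgue. t \<in> {0..T} \<longrightarrow> \<bar>u1 t\<bar> \<le> 1 \<and> \<bar>u2 t\<bar> \<le> 1"
    using adm unfolding admissible_def by (auto elim: eventually_mono)
  have "AE t in lebesgue. t \<in> {0..T} \<longrightarrow>
          (\<exists>l'. (lam has_vector_derivative l') (at t) \<and>
               ((\<lambda>p. ham (lam t) p (u1 t) (u2 t)) has_derivative (\<lambda>h. - (l' \<bullet> h))) (at (\<gamma> t))) \<and>
          (\<gamma> has_vector_derivative (u1 t *\<^sub>R X1 (\<gamma> t) + u2 t *\<^sub>R X2 (\<gamma> t))) (at t) \<and>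
          u1 t * phi1 \<gamma> lam t + u2 t * phi2 \<gamma> lam t = lam0 \<and>
          \<bar>phi1 \<gamma> lam t\<bar> + \<bar>phi2 \<gamma> lam t\<bar> = lam0 \<and> \<bar>u1 t\<bar> \<le> 1 \<and> \<bar>u2 t\<bar> \<le> 1"
    (is "AE t in lebesgue. ?P t")
    using AE_conjI[OF ae bounds] by (rule AE_mp) (intro AE_I2, blast)
  then obtain N where sub: "{t \<in> space lebesgue. \<not> ?P t} \<subseteq> N"
    and "emeasure lebesgue N = 0" "N \<in> sets lebesgue"
    by (rule AE_E)
  then have "negligible N"
    by (simp add: negligible_iff_null_sets null_setsI)
  have N: "?P t" if "t \<in> {0..T} - N" for t
    using sub that by auto
  show ?thesis
  proof (rule that)
    show "negligible N"
      by fact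
    show "(lam has_vector_derivative (- u2 t * snd (snd (lam t)) / 2, u1 t * snd (snd (lam t)) / 2, 0)) (at t)"
      if t: "t \<in> {0..T} - N" for t
    proof -
      obtain l' where "(lam has_vector_derivative l') (at t)"
        "((\<lambda>p. ham (lam t) p (u1 t) (u2 t)) has_derivative (\<lambda>h. - (l' \<bullet> h))) (at (\<gamma> t))"
        using N[OF t] t by auto
      then show ?thesis
        using adjoint_equation by metis
    qed
  qed (use adm \<open>abs_cont_on 0 T lam\<close> N in auto)
qed

lemma costate_vertical_constant:
  fixes lam :: "real \<Rightarrow> R3"
  assumes lam: "abs_cont_on 0 T lam" and N: "negligible N"
    and lam': "\<And>t. t \<in> {0..T} - N \<Longrightarrow> (lam has_vector_derivative (a t, b t, 0)) (at t)"
    and s: "s \<in> {0..T}"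
  shows "snd (snd (lam s)) = snd (snd (lam 0))"
proof -
  have bl: "bounded_linear (\<lambda>v::R3. snd (snd v))"
    by (rule bounded_linear_compose[OF bounded_linear_snd bounded_linear_snd])
  have "abs_cont_on 0 s lam"
    using abs_cont_on_subinterval[OF lam, of 0 s] s by simp
  from abs_cont_on_bounded_linear[OF this bl] have ac: "abs_cont_on 0 s (\<lambda>t. snd (snd (lam t)))"
    by simp
  have "((\<lambda>t. snd (snd (lam t))) has_vector_derivative 0) (at t)" if "t \<in> {0..s} - N" for t
    using bounded_linear.has_vector_derivative[OF bl lam'[of t]] that s by simp
  from abs_cont_on_derivative_zero_imp_eq[OF ac _ N this] s show ?thesis
    by simp
qed

lemma costate_planar_conservation:
  fixes lam \<gamma> :: "real \<Rightarrow> R3"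
  assumes lam: "abs_cont_on 0 T lam" and \<gamma>: "abs_cont_on 0 T \<gamma>" and N: "negligible N"
    and \<gamma>': "\<And>t. t \<in> {0..T} - N \<Longrightarrow> (\<gamma> has_vector_derivative u1 t *\<^sub>R X1 (\<gamma> t) + u2 t *\<^sub>R X2 (\<gamma> t)) (at t)"
    and lam': "\<And>t. t \<in> {0..T} - N \<Longrightarrow> (lam has_vector_derivative (- u2 t * c / 2, u1 t * c / 2, 0)) (at t)"
    and s: "s \<in> {0..T}"
  shows "fst (lam s) + c / 2 * fst (snd (\<gamma> s)) = fst (lam 0) + c / 2 * fst (snd (\<gamma> 0))"
    "fst (snd (lam s)) - c / 2 * fst (\<gamma> s) = fst (snd (lam 0)) - c / 2 * fst (\<gamma> 0)"
proof -
  define M where "M v = (c / 2 * fst (snd v), - c / 2 * fst v)" for v :: R3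
  define W where "W t = (fst (lam t), fst (snd (lam t))) + M (\<gamma> t)" for t
  have M: "bounded_linear M"
    unfolding M_def
    by (intro bounded_linear_Pair bounded_linear_mult_right[THEN bounded_linear_compose]
        bounded_linear_fst bounded_linear_compose[OF bounded_linear_fst bounded_linear_snd])
  have "abs_cont_on 0 s lam" "abs_cont_on 0 s \<gamma>"
    using abs_cont_on_subinterval[OF lam, of 0 s] abs_cont_on_subinterval[OF \<gamma>, of 0 s] s by simp_all
  from abs_cont_on_add[OF abs_cont_on_bounded_linear[OF this(1) bounded_linear_proj12]
      abs_cont_on_bounded_linear[OF this(2) M]]
  have ac: "abs_cont_on 0 s W"
    unfolding W_def by simp
  have "(W has_vector_derivative 0) (at t)" if "t \<in> {0..s} - N" for t
  proof -
    have t: "t \<in> {0..T} - N"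
      using that s by auto
    have "(W has_vector_derivative (- u2 t * c / 2, u1 t * c / 2) + M (u1 t *\<^sub>R X1 (\<gamma> t) + u2 t *\<^sub>R X2 (\<gamma> t))) (at t)"
      unfolding W_def
      using has_vector_derivative_add[OF bounded_linear.has_vector_derivative[OF bounded_linear_proj12 lam'[OF t]]
        bounded_linear.has_vector_derivative[OF M \<gamma>'[OF t]]]
      by simp
    then show ?thesis
      by (simp add: M_def X1_X2_combination algebra_simps zero_prod_def)
  qed
  from abs_cont_on_derivative_zero_imp_eq[OF ac _ N this] s have "W s = W 0"
    by simp
  then show "fst (lam s) + c / 2 * fst (snd (\<gamma> s)) = fst (lam 0) + c / 2 * fst (snd (\<gamma> 0))"
    "fst (snd (lam s)) - c / 2 * fst (\<gamma> s) = fst (snd (lam 0)) - c / 2 * fst (\<gamma> 0)"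
    by (simp_all add: W_def M_def)
qed

lemma extremal_pair_affine_switching:
  assumes ext: "extremal_pair T \<gamma> u1 u2 lam" and reg: "regular_arc T \<gamma> lam a b"
  obtains N A0 B0 c l0 where "affine_switching T \<gamma> u1 u2 N (phi1 \<gamma> lam) (phi2 \<gamma> lam) A0 B0 c l0"
proof -
  obtain N lam0 where N: "negligible N" and adm: "admissible T \<gamma> u1 u2" and lam: "abs_cont_on 0 T lam"
    and bounds: "\<And>t. t \<in> {0..T} - N \<Longrightarrow> \<bar>u1 t\<bar> \<le> 1 \<and> \<bar>u2 t\<bar> \<le> 1"
    and \<gamma>': "\<And>t. t \<in> {0..T} - N \<Longrightarrow> (\<gamma> has_vector_derivative u1 t *\<^sub>R X1 (\<gamma> t) + u2 t *\<^sub>R X2 (\<gamma> t)) (at t)"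
    and lam': "\<And>t. t \<in> {0..T} - N \<Longrightarrow>
      (lam has_vector_derivative (- u2 t * snd (snd (lam t)) / 2, u1 t * snd (snd (lam t)) / 2, 0)) (at t)"
    and max: "\<And>t. t \<in> {0..T} - N \<Longrightarrow>
      u1 t * phi1 \<gamma> lam t + u2 t * phi2 \<gamma> lam t = \<bar>phi1 \<gamma> lam t\<bar> + \<bar>phi2 \<gamma> lam t\<bar>"
    and level: "\<And>t. t \<in> {0..T} - N \<Longrightarrow> \<bar>phi1 \<gamma> lam t\<bar> + \<bar>phi2 \<gamma> lam t\<bar> = lam0"
    using ext by (rule extremal_pairE) (rule that)
  have \<gamma>_ac: "abs_cont_on 0 T \<gamma>"
    using adm by (simp add: admissible_def)
  define c where "c = snd (snd (lam 0))"
  have vertical: "snd (snd (lam t)) = c" if "t \<in> {0..T}" for t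
    using costate_vertical_constant[OF lam N lam' that] unfolding c_def .
  have lam'': "(lam has_vector_derivative (- u2 t * c / 2, u1 t * c / 2, 0)) (at t)" if "t \<in> {0..T} - N" for t
    using lam'[OF that] vertical[of t] that by simp
  define A0 B0 where "A0 = fst (lam 0) + c / 2 * fst (snd (\<gamma> 0))" and "B0 = fst (snd (lam 0)) - c / 2 * fst (\<gamma> 0)"
  have P1: "phi1 \<gamma> lam t = A0 - c * fst (snd (\<gamma> t))" and P2: "phi2 \<gamma> lam t = B0 + c * fst (\<gamma> t)"
    if "t \<in> {0..T}" for t
    using costate_planar_conservation[OF lam \<gamma>_ac N \<gamma>' lam'' that] vertical[OF that]
    by (simp_all add: phi1_def phi2_def inner_X1 inner_X2 A0_def B0_def algebra_simps)
  have "0 \<le> a" "a < b" "b \<le> T"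
    using reg by (simp_all add: regular_arc_def)
  have cont: "continuous_on {0..T} (\<lambda>t. \<bar>phi1 \<gamma> lam t\<bar> + \<bar>phi2 \<gamma> lam t\<bar> - lam0)"
  proof -
    have "continuous_on {0..T} (\<lambda>t. \<bar>A0 - c * fst (snd (\<gamma> t))\<bar> + \<bar>B0 + c * fst (\<gamma> t)\<bar> - lam0)"
      using abs_cont_on_imp_continuous_on[OF \<gamma>_ac] by (intro continuous_intros)
    then show ?thesis
      by (rule continuous_on_eq) (simp add: P1 P2)
  qed
  have "0 < T"
    using \<open>0 \<le> a\<close> \<open>a < b\<close> \<open>b \<le> T\<close> by simp
  have level_all: "\<bar>phi1 \<gamma> lam t\<bar> + \<bar>phi2 \<gamma> lam t\<bar> = lam0" if "t \<in> {0..T}" for t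
    using continuous_on_eq_0_off_negligible[OF cont \<open>0 < T\<close> N _ that] level by simp
  have "0 < lam0"
  proof -
    define m where "m = (a + b) / 2"
    have "m \<in> {a<..<b}" "m \<in> {0..T}"
      using \<open>0 \<le> a\<close> \<open>a < b\<close> \<open>b \<le> T\<close> by (simp_all add: m_def)
    then have "phi1 \<gamma> lam m \<noteq> 0"
      using reg by (simp add: regular_arc_def)
    with level_all[OF \<open>m \<in> {0..T}\<close>] show ?thesis
      by linarith
  qed
  show ?thesis
  proof (rule that, unfold_locales)
    fix t assume t: "t \<in> {0..T} - N"
    show "phi1 \<gamma> lam t \<noteq> 0 \<Longrightarrow> phi2 \<gamma> lam t \<noteq> 0 \<Longrightarrow> u1 t = sgn (phi1 \<gamma> lam t)"
      using maximizing_control_eq_sgn[of "u1 t" "u2 t"] bounds[OF t] max[OF t] by blast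
    show "phi1 \<gamma> lam t \<noteq> 0 \<Longrightarrow> phi2 \<gamma> lam t \<noteq> 0 \<Longrightarrow> u2 t = sgn (phi2 \<gamma> lam t)"
      using maximizing_control_eq_sgn[of "u2 t" "u1 t"] bounds[OF t] max[OF t] by (simp add: add.commute)
  qed (use adm N \<gamma>' P1 P2 level_all \<open>0 < lam0\<close> in auto)
qed

lemma max_regular_arcD:
  assumes "max_regular_arc T \<gamma> lam a b"
  shows "regular_arc T \<gamma> lam a b"
    and "regular_arc T \<gamma> lam a' b' \<Longrightarrow> {a<..<b} \<subseteq> {a'<..<b'} \<Longrightarrow> a' = a \<and> b' = b"
  using assms unfolding max_regular_arc_def by blast+

lemma arcs_inj_on_fst: "inj_on fst (arcs T \<gamma> lam)"
proof (rule inj_onI)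
  fix x y assume "x \<in> arcs T \<gamma> lam" "y \<in> arcs T \<gamma> lam" "fst x = fst y"
  moreover obtain a b a' b' where x: "x = (a, b)" and y: "y = (a', b')"
    by (cases x, cases y)
  ultimately have "a' = a" and ab: "max_regular_arc T \<gamma> lam a b" and ab': "max_regular_arc T \<gamma> lam a b'"
    by (simp_all add: arcs_def)
  have "b = b'"
  proof (cases "b \<le> b'")
    case True
    then have "{a<..<b} \<subseteq> {a<..<b'}"
      by auto
    then show ?thesis
      using max_regular_arcD(2)[OF ab max_regular_arcD(1)[OF ab']] by simp
  next
    case False
    then have "{a<..<b'} \<subseteq> {a<..<b}"
      by auto
    then show ?thesis
      using max_regular_arcD(2)[OF ab' max_regular_arcD(1)[OF ab]] by simp
  qed
  with x y \<open>a' = a\<close> show "x = y"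
    by simp
qed

lemma continuous_on_nonzero_nearby:
  fixes f :: "'a::metric_space \<Rightarrow> 'b::real_normed_vector"
  assumes "continuous_on S f" "x \<in> S" "f x \<noteq> 0"
  obtains d where "d > 0" "\<And>y. y \<in> S \<Longrightarrow> dist y x < d \<Longrightarrow> f y \<noteq> 0"
proof -
  have "\<forall>e>0. \<exists>d>0. \<forall>y\<in>S. dist y x < d \<longrightarrow> dist (f y) (f x) < e"
    using assms(1,2) unfolding continuous_on_iff by blast
  moreover have "norm (f x) > 0"
    using assms(3) by simp
  ultimately obtain d where "d > 0" and d: "\<forall>y\<in>S. dist y x < d \<longrightarrow> dist (f y) (f x) < norm (f x)"
    by blast
  have "f y \<noteq> 0" if "y \<in> S" "dist y x < d" for y
    using d that by (auto simp: dist_norm)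
  with \<open>d > 0\<close> show ?thesis
    using that by blast
qed

lemma arc_start_is_switching_time:
  assumes cont: "continuous_on {0..T} (phi1 \<gamma> lam)" "continuous_on {0..T} (phi2 \<gamma> lam)"
    and arc: "(a, b) \<in> arcs T \<gamma> lam" and "a \<noteq> 0"
  shows "a \<in> {t \<in> {0<..<T}. phi1 \<gamma> lam t = 0 \<or> phi2 \<gamma> lam t = 0}"
proof -
  have max: "max_regular_arc T \<gamma> lam a b" and reg: "regular_arc T \<gamma> lam a b"
    using arc unfolding arcs_def max_regular_arc_def by auto
  then have ab: "0 < a" "a < b" "b \<le> T"
    using \<open>a \<noteq> 0\<close> unfolding regular_arc_def by auto
  have "phi1 \<gamma> lam a = 0 \<or> phi2 \<gamma> lam a = 0"
  proof (rule ccontr)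
    assume "\<not> ?thesis"
    moreover have "a \<in> {0..T}"
      using ab by simp
    ultimately obtain d1 d2 where "d1 > 0" "d2 > 0"
      and d1: "\<And>t. t \<in> {0..T} \<Longrightarrow> dist t a < d1 \<Longrightarrow> phi1 \<gamma> lam t \<noteq> 0"
      and d2: "\<And>t. t \<in> {0..T} \<Longrightarrow> dist t a < d2 \<Longrightarrow> phi2 \<gamma> lam t \<noteq> 0"
      using continuous_on_nonzero_nearby[OF cont(1)] continuous_on_nonzero_nearby[OF cont(2)] by metis
    define a' where "a' = max 0 (a - min d1 d2 / 2)"
    have "0 \<le> a'" "a' < a"
      using ab \<open>d1 > 0\<close> \<open>d2 > 0\<close> by (auto simp: a'_def)
    have "phi1 \<gamma> lam t \<noteq> 0 \<and> phi2 \<gamma> lam t \<noteq> 0" if "t \<in> {a'<..<b}" for t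
    proof (cases "t \<le> a")
      case True
      with that \<open>0 \<le> a'\<close> ab have "t \<in> {0..T}" "dist t a < d1" "dist t a < d2"
        by (auto simp: a'_def dist_real_def)
      then show ?thesis
        using d1 d2 by blast
    next
      case False
      with that reg show ?thesis
        by (simp add: regular_arc_def)
    qed
    with \<open>0 \<le> a'\<close> \<open>a' < a\<close> ab have "regular_arc T \<gamma> lam a' b"
      by (simp add: regular_arc_def)
    with max \<open>a' < a\<close> show False
      using max_regular_arcD(2)[OF max] by fastforce
  qed
  with ab show ?thesis
    by simp
qed

lemma card_arcs_le_switching_times:
  assumes "continuous_on {0..T} (phi1 \<gamma> lam)" "continuous_on {0..T} (phi2 \<gamma> lam)"
    and fin: "finite {t \<in> {0<..<T}. phi1 \<gamma> lam t = 0 \<or> phi2 \<gamma> lam t = 0}"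
  shows "card (arcs T \<gamma> lam) \<le> card {t \<in> {0<..<T}. phi1 \<gamma> lam t = 0 \<or> phi2 \<gamma> lam t = 0} + 1"
proof -
  let ?Z = "{t \<in> {0<..<T}. phi1 \<gamma> lam t = 0 \<or> phi2 \<gamma> lam t = 0}"
  have "fst ` arcs T \<gamma> lam \<subseteq> insert 0 ?Z"
    using arc_start_is_switching_time[OF assms(1,2)] by force
  then have "card (fst ` arcs T \<gamma> lam) \<le> card (insert 0 ?Z)"
    using fin by (intro card_mono) auto
  also have "\<dots> \<le> card ?Z + 1"
    by (simp add: card_insert_le_m1 fin card_insert_if)
  finally show ?thesis
    by (simp add: card_image[OF arcs_inj_on_fst])
qed

lemma finite_switching_times:
  assumes "regular_bang_bang_wrt T \<gamma> lam"
  shows "finite {t \<in> {0<..<T}. phi1 \<gamma> lam t = 0 \<or> phi2 \<gamma> lam t = 0}"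
proof -
  obtain S A where "finite S" "A \<subseteq> arcs T \<gamma> lam" and cover: "{0..T} - S = (\<Union>(a, b)\<in>A. {a<..<b})"
    using assms unfolding regular_bang_bang_wrt_def by blast
  have "{t \<in> {0<..<T}. phi1 \<gamma> lam t = 0 \<or> phi2 \<gamma> lam t = 0} \<subseteq> S"
  proof
    fix t assume t: "t \<in> {t \<in> {0<..<T}. phi1 \<gamma> lam t = 0 \<or> phi2 \<gamma> lam t = 0}"
    show "t \<in> S"
    proof (rule ccontr)
      assume "t \<notin> S"
      with t have "t \<in> {0..T} - S"
        by auto
      then have "t \<in> (\<Union>(a, b)\<in>A. {a<..<b})"
        by (simp only: cover)
      then obtain a b where "(a, b) \<in> A" "t \<in> {a<..<b}"
        by blast
      with \<open>A \<subseteq> arcs T \<gamma> lam\<close> t show False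
        unfolding arcs_def max_regular_arc_def regular_arc_def by auto
    qed
  qed
  from this \<open>finite S\<close> show ?thesis
    by (rule finite_subset)
qed

theorem mainTheorem5:
  fixes T :: real and \<gamma> lam :: "real \<Rightarrow> R3" and u1 u2 :: "real \<Rightarrow> real"
  assumes "extremal_pair T \<gamma> u1 u2 lam"
    and "regular_bang_bang_wrt T \<gamma> lam"
    and "card (arcs T \<gamma> lam) > 5"
  shows "\<not> time_minimizer T \<gamma>"
proof -
  have "arcs T \<gamma> lam \<noteq> {}"
    using assms(3) by auto
  then obtain a b where "regular_arc T \<gamma> lam a b"
    by (auto simp: arcs_def max_regular_arc_def)
  then obtain N A0 B0 c l0 where sw: "affine_switching T \<gamma> u1 u2 N (phi1 \<gamma> lam) (phi2 \<gamma> lam) A0 B0 c l0"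
    by (rule extremal_pair_affine_switching[OF assms(1)])
  let ?Z = "{t \<in> {0<..<T}. phi1 \<gamma> lam t = 0 \<or> phi2 \<gamma> lam t = 0}"
  have "finite ?Z"
    using assms(2) by (rule finite_switching_times)
  moreover have "card (arcs T \<gamma> lam) \<le> card ?Z + 1"
    using affine_switching.continuous_on_P1[OF sw] affine_switching.continuous_on_P2[OF sw] \<open>finite ?Z\<close>
    by (rule card_arcs_le_switching_times)
  ultimately show ?thesis
    using assms(3) affine_switching.switching_times_not_time_minimizer[OF sw] by simp
qed

end
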